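(* Let $U:\mathbb{R}^d\to\mathbb{R}$ satisfy: (A1) $U$ is continuously differentiable and $\|\nabla U(x)-\nabla U(y)\|_2\le L\|x-y\|_2$ for all $x,y$, for some $L>0$; (A2) $\nabla U(0)=0$; (A3) there exist $m,R>0$ such that for all $x,y\in\mathbb{R}^d$ with $\|x-y\|_2>R$, $\langle\nabla U(x)-\nabla U(y),x-y\rangle\ge m\|x-y\|_2^2$. Let $\kappa=L/m$, $c=1000$, and $\delta\le\frac1{12000\kappa}$. Let $(x_t,u_t)$ solve the discretized underdamped Langevin SDE $$dx_t=u_t\,dt,\qquad du_t=\Big(-2u_t-\frac1{c\kappa L}\nabla U\big(x_{\lfloor t/\delta\rfloor\delta}\big)\Big)dt+\sqrt{\frac4{c\kappa L}}\,dB_t,$$ started from the point mass at $(x_0,0)$ with $\|x_0\|_2\le R$, where $B_t$ is a standard Brownian motion in $\mathbb{R}^d$. Then for all $t>0$, $$\mathbb{E}\big[\|\nabla U(x_t)-\nabla U(x_{\lfloor t/\delta\rfloor\delta})\|_2^2\big]\le10^9L^2\delta^2(R^2+d/m).$$ *)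

theory Defs
  imports "HOL-Analysis.Analysis" "HOL-Probability.Probability"
begin

definition brownian_motion :: "'a measure \<Rightarrow> (real \<Rightarrow> 'a \<Rightarrow> real^'d) \<Rightarrow> bool" where
  "brownian_motion M B \<longleftrightarrow>
     prob_space M \<and>
     (\<forall>t\<ge>0. B t \<in> borel_measurable M) \<and>
     (AE \<omega> in M. B 0 \<omega> = 0 \<and> continuous_on {0..} (\<lambda>t. B t \<omega>)) \<and>
     (\<forall>ts::real list. sorted_wrt (<) ts \<and> (\<forall>t\<in>set ts. 0 \<le> t) \<longrightarrow>
        prob_space.indep_vars M (\<lambda>_. borel)
          (\<lambda>(k, i) \<omega>. (B (ts ! Suc k) \<omega> - B (ts ! k) \<omega>) $ i)
          ({..<length ts - 1} \<times> (UNIV :: 'd set))) \<and>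
     (\<forall>s t. 0 \<le> s \<and> s < t \<longrightarrow>
        (\<forall>i. distributed M lborel (\<lambda>\<omega>. (B t \<omega> - B s \<omega>) $ i) (normal_density 0 (sqrt (t - s)))))"

end

(*
  The velocity is split as u = 2 (q - x) + e, where the auxiliary position q, essentially x + u/2,
  is built so that its derivative -(a/2) G(x at the last grid point) + h contains no white noise:
  e is the deviation of the Brownian motion B from its moving average over the last unit of time
  and h its increment over that unit, both with second moments of order sigma^2 d.

  Along every path, V = |q|^2 + |x - q|^2 + (delta/100) M decays at rate a m / 8 up to a forcing
  term, where M(s), the integral of (r - s + 2 delta) |u r|^2 over [s - 2 delta, s], absorbs the
  lag |x s - x(grid s)|^2 <= delta * (integral of |u|^2 over the last grid cell). Gronwall's
  inequality then bounds |x t|^2, and a second Gronwall argument for x - q, which is contracted at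
  rate 1, bounds |u t|^2, both by convolutions of Brownian increments. Taking expectations
  (Tonelli, on a jointly measurable version of the processes) bounds E|x t|^2 and E|u t|^2
  uniformly in t by multiples of R^2 + d/m, and finally
  |G(x t) - G(x(grid t))|^2 <= L^2 delta * (integral of |u|^2 over the last grid cell).
*)

theory Submission
  imports Defs
begin

lemma two_mult_le_weighted_squares:
  fixes a b e :: real
  assumes "e > 0"
  shows "2 * a * b \<le> e * a^2 + b^2 / e"
proof -
  have "0 \<le> (e * a - b)^2 / e" using assms by simp
  also have "(e * a - b)^2 / e = e * a^2 - 2 * a * b + b^2 / e"
    using assms by (simp add: power2_eq_square field_simps)
  finally show ?thesis by simp
qed

lemma norm_add_square_le:
  fixes y z :: "'a::real_normed_vector"
  shows "(norm (y + z))^2 \<le> 2 * (norm y)^2 + 2 * (norm z)^2"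
proof -
  have "(norm (y + z))^2 \<le> (norm y + norm z)^2"
    by (intro power_mono norm_triangle_ineq) simp
  also have "\<dots> \<le> 2 * (norm y)^2 + 2 * (norm z)^2"
    using sum_squares_bound[of "norm y" "norm z"] by (simp add: power2_sum)
  finally show ?thesis .
qed

lemma has_real_derivative_norm_square:
  fixes f :: "real \<Rightarrow> 'a::real_inner"
  assumes "(f has_vector_derivative f') (at s)"
  shows "((\<lambda>s. (norm (f s))^2) has_real_derivative (2 * (f s \<bullet> f'))) (at s)"
proof -
  have "((\<lambda>s. f s \<bullet> f s) has_derivative (\<lambda>h. f s \<bullet> (h *\<^sub>R f') + (h *\<^sub>R f') \<bullet> f s)) (at s)"
    using assms unfolding has_vector_derivative_def by (intro derivative_eq_intros) auto
  then show ?thesis unfolding has_field_derivative_def power2_norm_eq_inner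
    by (auto simp: inner_commute algebra_simps elim!: has_derivative_eq_rhs)
qed

lemma isCont_if_continuous_on_Ici:
  fixes f :: "real \<Rightarrow> 'b::topological_space"
  assumes "continuous_on {l..} f" and "s > l"
  shows "isCont f s"
  using assms by (intro continuous_on_interior[of "{l..}"]) (auto simp: interior_Ici[of "l - 1"])

lemma continuous_on_Ici_if_continuous_on_intervals:
  fixes f :: "real \<Rightarrow> 'b::topological_space"
  assumes "\<And>b. continuous_on {l..b} f"
  shows "continuous_on {l..} f"
  unfolding continuous_on_eq_continuous_within
proof
  fix s :: real assume s: "s \<in> {l..}"
  have "continuous (at s within {l..s+1}) f"
    using assms[of "s+1"] s by (simp add: continuous_on_eq_continuous_within)
  moreover have "at s within {l..} = at s within {l..s+1}"
    by (rule at_within_nhd[where S="{..<s+1}"]) auto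
  ultimately show "continuous (at s within {l..}) f" by (simp add: continuous_within)
qed

lemma integral_has_vector_derivative_at_isCont:
  fixes f :: "real \<Rightarrow> 'b::banach"
  assumes f: "f integrable_on {a..b}" and s: "a < s" "s < b" and cont: "isCont f s"
  shows "((\<lambda>r. integral {a..r} f) has_vector_derivative f s) (at s)"
proof -
  have "((\<lambda>r. integral {a..r} f) has_vector_derivative f s) (at s within {a..b} - {})"
    by (rule integral_has_vector_derivative_continuous_at[OF f _ finite.emptyI])
      (use s cont in \<open>auto intro: continuous_at_imp_continuous_within\<close>)
  then show ?thesis using s by (simp add: at_within_Icc_at)
qed

lemma indefinite_integral_has_vector_derivative_at:
  fixes f :: "real \<Rightarrow> 'b::banach"
  assumes f: "continuous_on {l..} f" and s: "s > l"
  shows "((\<lambda>r. integral {l..r} f) has_vector_derivative f s) (at s)"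
  using assms
  by (intro integral_has_vector_derivative_at_isCont[where b="s + 1"] isCont_if_continuous_on_Ici
      integrable_continuous_interval continuous_on_subset[OF f]) auto

lemma norm_integral_square_le:
  fixes f :: "real \<Rightarrow> 'a::euclidean_space"
  assumes f: "continuous_on {a..b} f" and "a \<le> b"
  shows "(norm (integral {a..b} f))^2 \<le> (b - a) * integral {a..b} (\<lambda>r. (norm (f r))^2)"
proof -
  define I where "I = integral {a..b} (\<lambda>r. norm (f r))"
  define J where "J = integral {a..b} (\<lambda>r. (norm (f r))^2)"
  have int_norm: "(\<lambda>r. norm (f r)) integrable_on {a..b}"
    by (intro integrable_continuous_interval continuous_intros f)
  have int_sq: "(\<lambda>r. (norm (f r))^2) integrable_on {a..b}"
    by (intro integrable_continuous_interval continuous_intros f)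
  have "norm (integral {a..b} f) \<le> I" unfolding I_def
    by (rule integral_norm_bound_integral[OF integrable_continuous_interval[OF f] int_norm]) auto
  then have "(norm (integral {a..b} f))^2 \<le> I^2" by (intro power_mono) auto
  moreover have "I^2 \<le> (b - a) * J"
  proof (cases "a = b")
    case True
    then show ?thesis unfolding I_def J_def by simp
  next
    case False
    define w where "w = b - a"
    have w: "w > 0" using False assms unfolding w_def by simp
    define l where "l = I / w"
    \<comment> \<open>the variance of \<open>norm \<circ> f\<close> about its mean \<open>l\<close> is nonnegative\<close>
    have "((\<lambda>r. (norm (f r) - l)^2) has_integral (J - 2 * l * I + l^2 * w)) {a..b}"
    proof -
      have "((\<lambda>r. (norm (f r))^2 - 2 * l * norm (f r) + l^2) has_integral
          (J - 2 * l * I + Henstock_Kurzweil_Integration.content {a..b} *\<^sub>R l^2)) {a..b}"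
        unfolding I_def J_def
        by (intro has_integral_add has_integral_diff has_integral_mult_right integrable_integral
            int_norm int_sq has_integral_const_real)
      then show ?thesis using assms unfolding w_def by (simp add: power2_diff algebra_simps)
    qed
    then have "0 \<le> J - 2 * l * I + l^2 * w"
      by (rule has_integral_nonneg) simp
    also have "J - 2 * l * I + l^2 * w = J - I^2 / w"
      unfolding l_def using w by (simp add: field_simps power2_eq_square)
    finally have "I^2 / w \<le> J" by simp
    then show ?thesis using w unfolding w_def by (simp add: divide_le_eq mult.commute)
  qed
  ultimately show ?thesis unfolding J_def by linarith
qed

lemma gronwall_except_finite:
  fixes V K V' :: "real \<Rightarrow> real"
  assumes S: "finite S" and t: "0 \<le> t"
    and V: "continuous_on {0..t} V"
    and K: "(\<lambda>r. exp (c * r) * K r) integrable_on {0..t}"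
    and V': "\<And>s. s \<in> {0<..<t} - S \<Longrightarrow> (V has_real_derivative V' s) (at s)"
    and K_cont: "\<And>s. s \<in> {0<..<t} - S \<Longrightarrow> isCont K s"
    and ineq: "\<And>s. s \<in> {0<..<t} - S \<Longrightarrow> V' s \<le> - c * V s + K s"
  shows "V t \<le> exp (-c * t) * (V 0 + integral {0..t} (\<lambda>r. exp (c * r) * K r))"
proof -
  define I where "I s = integral {0..s} (\<lambda>r. exp (c * r) * K r)" for s
  define S' where "S' = S \<union> {0, t}"
  have S': "finite S'" using S by (simp add: S'_def)
  define f' where "f' s = (if s \<in> S' then 0 else exp (c * s) * (c * V s + V' s - K s))" for s
  \<comment> \<open>\<open>\<phi>\<close> is nonincreasing: the usual integrating factor\<close>
  define \<phi> where "\<phi> s = exp (c * s) * V s - I s" for s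
  have I': "(I has_real_derivative exp (c * s) * K s) (at s)" if s: "s \<in> {0<..<t} - S'" for s
    unfolding I_def has_real_derivative_iff_has_vector_derivative
    by (rule integral_has_vector_derivative_at_isCont[OF K])
      (use s K_cont[of s] in \<open>auto simp: S'_def intro!: continuous_intros\<close>)
  have "(f' has_integral (\<phi> t - \<phi> 0)) {0..t}"
  proof (rule fundamental_theorem_of_calculus_interior_strong[OF S' t])
    fix s assume s: "s \<in> {0<..<t} - S'"
    have "(\<phi> has_real_derivative c * exp (c * s) * V s + exp (c * s) * V' s - exp (c * s) * K s)
        (at s)"
      unfolding \<phi>_def using s V'[of s] I'[OF s] unfolding S'_def
      by (auto intro!: derivative_eq_intros)
    then show "(\<phi> has_vector_derivative f' s) (at s)"
      using s unfolding f'_def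
          by (simp add: has_real_derivative_iff_has_vector_derivative algebra_simps)
  next
    show "continuous_on {0..t} \<phi>"
      unfolding \<phi>_def I_def by (intro continuous_intros V indefinite_integral_continuous_1 K)
  qed
  moreover have "f' s \<le> 0" if "s \<in> {0..t}" for s
    using ineq[of s] that unfolding f'_def S'_def by (auto intro!: mult_nonneg_nonpos)
  ultimately have "\<phi> t - \<phi> 0 \<le> 0"
    using has_integral_le[of f' _ "{0..t}" "\<lambda>_. 0" 0] by fastforce
  then have "exp (c * t) * V t \<le> V 0 + I t" unfolding \<phi>_def I_def by simp
  then have "exp (-c * t) * (exp (c * t) * V t) \<le> exp (-c * t) * (V 0 + I t)"
    by (intro mult_left_mono) auto
  then show ?thesis unfolding I_def by (simp add: exp_minus field_simps)
qed

lemma nn_integral_indicator_eq_integral: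
  fixes f :: "real \<Rightarrow> real"
  assumes "f integrable_on {a..b}" and "\<And>r. r \<in> {a..b} \<Longrightarrow> 0 \<le> f r"
  shows "(\<integral>\<^sup>+r. ennreal (indicator {a..b} r * f r) \<partial>lborel) = ennreal (integral {a..b} f)"
  by (rule nn_integral_has_integral_lebesgue[OF assms(2)]) (use assms(1) in auto)

lemma exp_convolution_le_nn_integral:
  fixes K :: "real \<Rightarrow> real" and KB :: "real \<Rightarrow> ennreal"
  assumes t: "0 \<le> t" and K: "(\<lambda>r. exp (c * r) * K r) integrable_on {0..t}"
    and K_nonneg: "\<And>r. 0 \<le> K r" and K_le: "\<And>r. r \<in> {0..t} \<Longrightarrow> ennreal (K r) \<le> KB r"
  shows "ennreal (exp (- c * t) * integral {0..t} (\<lambda>r. exp (c * r) * K r))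
    \<le> (\<integral>\<^sup>+r. ennreal (indicator {0..t} r * exp (- c * (t - r))) * KB r \<partial>lborel)"
proof -
  have kernel: "exp (- c * t) * (exp (c * r) * K r) = exp (- c * (t - r)) * K r" for r
    unfolding mult.assoc[symmetric] exp_add[symmetric] by (simp add: algebra_simps)
  have "exp (- c * t) * integral {0..t} (\<lambda>r. exp (c * r) * K r)
      = integral {0..t} (\<lambda>r. exp (- c * t) * (exp (c * r) * K r))"
    by (rule integral_mult_right[symmetric])
  also have "\<dots> = integral {0..t} (\<lambda>r. exp (- c * (t - r)) * K r)"
    by (simp only: kernel)
  moreover have "(\<lambda>r. exp (- c * (t - r)) * K r) integrable_on {0..t}"
    unfolding kernel[symmetric] by (rule integrable_on_mult_right[OF K])
  ultimately have "ennreal (exp (- c * t) * integral {0..t} (\<lambda>r. exp (c * r) * K r))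
      = (\<integral>\<^sup>+r. ennreal (indicator {0..t} r * (exp (- c * (t - r)) * K r)) \<partial>lborel)"
    by (simp add: nn_integral_indicator_eq_integral K_nonneg)
  also have "\<dots> \<le> (\<integral>\<^sup>+r. ennreal (indicator {0..t} r * exp (- c * (t - r))) * KB r \<partial>lborel)"
  proof (rule nn_integral_mono)
    fix r
    show "ennreal (indicator {0..t} r * (exp (- c * (t - r)) * K r))
        \<le> ennreal (indicator {0..t} r * exp (- c * (t - r))) * KB r"
      using K_le[of r] K_nonneg[of r]
      by (cases "r \<in> {0..t}") (auto simp: ennreal_mult intro: mult_left_mono)
  qed
  finally show ?thesis .
qed

section \<open>The time grid\<close>

definition grid_floor :: "real \<Rightarrow> real \<Rightarrow> real" where
  "grid_floor \<delta> r = of_int \<lfloor>r / \<delta>\<rfloor> * \<delta>"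

definition grid_points :: "real \<Rightarrow> real set" where
  "grid_points \<delta> = range (\<lambda>k::int. of_int k * \<delta>)"

lemma grid_floor_bounds:
  assumes "\<delta> > 0"
  shows "grid_floor \<delta> r \<le> r" and "r < grid_floor \<delta> r + \<delta>"
proof -
  have "of_int \<lfloor>r / \<delta>\<rfloor> * \<delta> \<le> r / \<delta> * \<delta>" "r / \<delta> * \<delta> < (of_int \<lfloor>r / \<delta>\<rfloor> + 1) * \<delta>"
    using assms by (intro mult_right_mono mult_strict_right_mono; linarith)+
  then show "grid_floor \<delta> r \<le> r" "r < grid_floor \<delta> r + \<delta>"
    unfolding grid_floor_def using assms by (auto simp: field_simps)
qed

lemma grid_floor_nonneg: "\<delta> > 0 \<Longrightarrow> 0 \<le> r \<Longrightarrow> 0 \<le> grid_floor \<delta> r"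
  unfolding grid_floor_def by (simp add: zero_le_mult_iff)

lemma grid_floor_eqI:
  assumes "\<delta> > 0" and "of_int k * \<delta> \<le> r" and "r < (of_int k + 1) * \<delta>"
  shows "grid_floor \<delta> r = of_int k * \<delta>"
proof -
  have "of_int k \<le> r / \<delta>" "r / \<delta> < of_int k + 1" using assms by (auto simp: field_simps)
  then have "\<lfloor>r / \<delta>\<rfloor> = k" by linarith
  then show ?thesis unfolding grid_floor_def by simp
qed

lemma eventually_grid_floor_eq:
  assumes d: "\<delta> > 0" and s: "s \<notin> grid_points \<delta>"
  shows "eventually (\<lambda>r. grid_floor \<delta> r = grid_floor \<delta> s) (nhds s)"
proof -
  define k where "k = \<lfloor>s / \<delta>\<rfloor>"
  have "of_int k * \<delta> \<le> s" "s < (of_int k + 1) * \<delta>"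
    using grid_floor_bounds[OF d, of s] unfolding grid_floor_def k_def by (auto simp: algebra_simps)
  moreover have "s \<noteq> of_int k * \<delta>" using s unfolding grid_points_def by auto
  ultimately have "s \<in> {of_int k * \<delta> <..< (of_int k + 1) * \<delta>}" by auto
  moreover have "\<forall>r \<in> {of_int k * \<delta> <..< (of_int k + 1) * \<delta>}. grid_floor \<delta> r = grid_floor \<delta> s"
    using grid_floor_eqI[OF d, of k] calculation by auto
  ultimately show ?thesis unfolding eventually_nhds by (meson open_greaterThanLessThan)
qed

lemma isCont_comp_grid_floor:
  assumes "\<delta> > 0" and "s \<notin> grid_points \<delta>"
  shows "isCont (\<lambda>r. f (grid_floor \<delta> r)) s"
proof -
  have "isCont (\<lambda>r. f (grid_floor \<delta> r)) s \<longleftrightarrow> isCont (\<lambda>r. f (grid_floor \<delta> s)) s"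
    by (rule isCont_cong) (use eventually_grid_floor_eq[OF assms] in \<open>auto elim: eventually_mono\<close>)
  then show ?thesis by simp
qed

lemma finite_grid_points_Icc:
  assumes d: "\<delta> > 0"
  shows "finite (grid_points \<delta> \<inter> {0..t})"
proof -
  have "grid_points \<delta> \<inter> {0..t} \<subseteq> (\<lambda>k::int. of_int k * \<delta>) ` {0..\<lceil>t / \<delta>\<rceil>}"
  proof
    fix r assume "r \<in> grid_points \<delta> \<inter> {0..t}"
    then obtain k :: int where k: "r = of_int k * \<delta>" "0 \<le> of_int k * \<delta>" "of_int k * \<delta> \<le> t"
      unfolding grid_points_def by auto
    then have "0 \<le> k" using d by (simp add: zero_le_mult_iff)
    moreover have "of_int k \<le> t / \<delta>" using k d by (simp add: field_simps)
    then have "k \<le> \<lceil>t / \<delta>\<rceil>" by linarith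
    ultimately show "r \<in> (\<lambda>k::int. of_int k * \<delta>) ` {0..\<lceil>t / \<delta>\<rceil>}" using k by auto
  qed
  then show ?thesis by (rule finite_subset) simp
qed

lemma integrable_on_comp_grid_floor:
  fixes F :: "real \<Rightarrow> real \<Rightarrow> 'b::banach"
  assumes d: "\<delta> > 0" and s: "0 \<le> s" and F: "\<And>y. continuous_on {0..s} (\<lambda>r. F r y)"
  shows "(\<lambda>r. F r (grid_floor \<delta> r)) integrable_on {0..s}"
proof -
  \<comment> \<open>on each grid cell the integrand agrees with a continuous function except at the right end\<close>
  have "(\<lambda>r. F r (grid_floor \<delta> r)) integrable_on {0..min s (real n * \<delta>)}" for n :: nat
  proof (induction n)
    case 0
    show ?case using s integrable_on_refl[of _ "0::real"] by (simp add: cbox_interval min_def)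
  next
    case (Suc n)
    show ?case
    proof (cases "s \<le> real n * \<delta>")
      case True
      then have "min s (real (Suc n) * \<delta>) = min s (real n * \<delta>)" using d
        by (simp add: min_def distrib_right)
      then show ?thesis using Suc by simp
    next
      case False
      have cell: "(\<lambda>r. F r (grid_floor \<delta> r)) integrable_on {real n * \<delta> .. min s (real (Suc n) * \<delta>)}"
      proof (rule integrable_spike_finite[where S="{real (Suc n) * \<delta>}"])
        show "(\<lambda>r. F r (real n * \<delta>)) integrable_on {real n * \<delta> .. min s (real (Suc n) * \<delta>)}"
          by (rule integrable_continuous_interval, rule continuous_on_subset[OF F])
            (use d in \<open>auto simp: zero_le_mult_iff\<close>)
        fix r assume "r \<in> {real n * \<delta> .. min s (real (Suc n) * \<delta>)} - {real (Suc n) * \<delta>}"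
        then have "grid_floor \<delta> r = of_int (int n) * \<delta>"
          by (intro grid_floor_eqI[OF d]) (auto simp: distrib_right)
        then show "F r (grid_floor \<delta> r) = F r (real n * \<delta>)" by simp
      qed simp
      have "min s (real n * \<delta>) = real n * \<delta>" using False by simp
      moreover have "real n * \<delta> \<le> min s (real (Suc n) * \<delta>)" using False d
          by (auto simp: distrib_right)
      ultimately show ?thesis
        using Henstock_Kurzweil_Integration.integrable_combine[OF _ _ _ cell] Suc.IH d by simp
    qed
  qed
  moreover obtain n :: nat where "s / \<delta> \<le> real n" using real_arch_simple by blast
  then have "s \<le> real n * \<delta>" using d by (simp add: field_simps)
  ultimately show ?thesis by (metis min_absorb1)
qed

section \<open>Pathwise estimates for a split velocity\<close>

text \<open>The parameter \<open>a\<close> is the drift factor \<open>1 / (c \<kappa> L)\<close> of the diffusion, with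
  \<open>c = 1000\<close> and \<open>\<kappa> = L / m\<close>, so that \<open>a L\<^sup>2 = m / 1000\<close>.\<close>

locale langevin_drift =
  fixes G :: "'v::euclidean_space \<Rightarrow> 'v" and L m R a \<delta> :: real
  assumes L_pos: "L > 0" and m_pos: "m > 0" and m_le_L: "m \<le> L" and a_pos: "a > 0"
    and a_L_sq: "a * L^2 = m / 1000"
    and \<delta>_pos: "\<delta> > 0" and \<delta>_le: "\<delta> \<le> 1 / 12000"
    and G_zero: "G 0 = 0"
    and G_Lipschitz: "\<And>y z. norm (G y - G z) \<le> L * norm (y - z)"
    and G_dissipative: "\<And>y. y \<bullet> G y \<ge> m * (norm y)^2 - (L + m) * R^2"
begin

lemma G_bound: "norm (G y) \<le> L * norm y"
  using G_Lipschitz[of y 0] by (simp add: G_zero)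

lemma a_L_le: "a * L \<le> 1 / 1000"
proof -
  have "a * L = m / (1000 * L)" using a_L_sq L_pos by (simp add: power2_eq_square field_simps)
  also have "\<dots> \<le> 1 / 1000" using m_le_L L_pos by (simp add: field_simps)
  finally show ?thesis .
qed

lemma a_m_le: "a * m \<le> 1 / 1000"
proof -
  have "a * m \<le> a * L" using m_le_L a_pos by simp
  then show ?thesis using a_L_le by linarith
qed

end

locale langevin_split = langevin_drift G L m R a \<delta>
  for G :: "'v::euclidean_space \<Rightarrow> 'v" and L m R a \<delta> :: real +
  fixes x0 :: 'v and x u q e h :: "real \<Rightarrow> 'v"
  assumes cont_x: "continuous_on {0..} x" and cont_u: "continuous_on {0..} u"
    and cont_q: "continuous_on {0..} q" and cont_e: "continuous_on {0..} e"
    and cont_h: "continuous_on {0..} h"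
    and x_deriv: "\<And>s. s > 0 \<Longrightarrow> (x has_vector_derivative u s) (at s)"
    and q_deriv: "\<And>s. s > 0 \<Longrightarrow> s \<notin> grid_points \<delta> \<Longrightarrow>
              (q has_vector_derivative ((- (a / 2)) *\<^sub>R G (x (grid_floor \<delta> s)) + h s)) (at s)"
    and u_split: "\<And>s. s \<ge> 0 \<Longrightarrow> u s = 2 *\<^sub>R (q s - x s) + e s"
    and x_0: "x 0 = x0" and q_0: "q 0 = x0"
begin

definition q' :: "real \<Rightarrow> 'v" where
  "q' s = (- (a / 2)) *\<^sub>R G (x (grid_floor \<delta> s)) + h s"

lemma q_has_derivative: "s > 0 \<Longrightarrow> s \<notin> grid_points \<delta> \<Longrightarrow> (q has_vector_derivative q' s) (at s)"
  unfolding q'_def by (rule q_deriv)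

lemma u_eq: "s \<ge> 0 \<Longrightarrow> u s = (-2) *\<^sub>R (x s - q s) + e s"
  using u_split[of s] by (simp add: algebra_simps)

lemma u_minus_q'_eq:
  "s \<ge> 0 \<Longrightarrow> u s - q' s = (-2) *\<^sub>R (x s - q s) + e s + (a / 2) *\<^sub>R G (x (grid_floor \<delta> s)) - h s"
  unfolding q'_def u_eq by (simp add: algebra_simps)

definition gap_forcing :: "real \<Rightarrow> real" where
  "gap_forcing r = (norm (e r))^2 + (norm (h r))^2 + (a * L)^2 * (norm (x (grid_floor \<delta> r)))^2"

lemma gap_forcing_nonneg: "0 \<le> gap_forcing r"
  unfolding gap_forcing_def by simp

lemma integrable_exp_gap_forcing:
  assumes "0 \<le> t"
  shows "(\<lambda>r. exp (c * r) * gap_forcing r) integrable_on {0..t}"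
  unfolding gap_forcing_def
  by (rule integrable_on_comp_grid_floor[OF \<delta>_pos assms, where F="\<lambda>r y. exp (c * r) *
        ((norm (e r))^2 + (norm (h r))^2 + (a * L)^2 * (norm (x y))^2)"])
    (intro continuous_intros continuous_on_subset[OF cont_e] continuous_on_subset[OF cont_h]; auto)

lemma x_minus_q_deriv_bound:
  assumes "s \<ge> 0"
  shows "2 * ((x s - q s) \<bullet> (u s - q' s)) \<le> - ((norm (x s - q s))^2) + gap_forcing s"
proof -
  define w where "w = x s - q s"
  define P where "P = a * L * norm (x (grid_floor \<delta> s))"
  have "w \<bullet> G (x (grid_floor \<delta> s)) \<le> norm w * norm (G (x (grid_floor \<delta> s)))"
    by (rule norm_cauchy_schwarz)
  also have "\<dots> \<le> norm w * (L * norm (x (grid_floor \<delta> s)))"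
    by (intro mult_left_mono G_bound) simp
  finally have "a * (w \<bullet> G (x (grid_floor \<delta> s))) \<le> a * (norm w * (L * norm (x (grid_floor \<delta> s))))"
    using a_pos by (intro mult_left_mono) auto
  then have wG: "a * (w \<bullet> G (x (grid_floor \<delta> s))) \<le> 2 * norm w * (P / 2)"
    unfolding P_def by (simp add: algebra_simps)
  have "2 * (w \<bullet> (u s - q' s)) =
      -4 * (norm w)^2 + 2 * (w \<bullet> e s) + a * (w \<bullet> G (x (grid_floor \<delta> s))) - 2 * (w \<bullet> h s)"
    unfolding u_minus_q'_eq[OF assms] w_def[symmetric]
    by (simp add: inner_add_right inner_diff_right power2_norm_eq_inner algebra_simps)
  also have "\<dots> \<le> -4 * (norm w)^2 + 2 * norm w * norm (e s) + 2 * norm w * (P / 2)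
      + 2 * norm w * norm (h s)"
    using norm_cauchy_schwarz[of w "e s"] norm_cauchy_schwarz[of w "- h s"] wG by simp
  also have "\<dots> \<le> - ((norm w)^2) + (norm (e s))^2 + (P / 2)^2 + (norm (h s))^2"
    using sum_squares_bound[of "norm w" "norm (e s)"] sum_squares_bound[of "norm w" "P / 2"]
      sum_squares_bound[of "norm w" "norm (h s)"] by linarith
  also have "\<dots> \<le> - ((norm w)^2) + gap_forcing s"
  proof -
    have "(P / 2)^2 \<le> P^2" using zero_le_power2[of P] by (simp add: power_divide)
    then show ?thesis unfolding gap_forcing_def P_def by (simp add: power_mult_distrib)
  qed
  finally show ?thesis unfolding w_def .
qed

lemma norm_x_minus_q_square_le:
  assumes t: "0 \<le> t"
  shows "(norm (x t - q t))^2 \<le> exp (- t) * integral {0..t} (\<lambda>r. exp r * gap_forcing r)"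
proof -
  have "(norm (x t - q t))^2 \<le> exp (- 1 * t) * ((norm (x 0 - q 0))^2
      + integral {0..t} (\<lambda>r. exp (1 * r) * gap_forcing r))"
  proof (rule gronwall_except_finite[where S="grid_points \<delta> \<inter> {0..t}"
        and V'="\<lambda>s. 2 * ((x s - q s) \<bullet> (u s - q' s))"])
    show "continuous_on {0..t} (\<lambda>s. (norm (x s - q s))^2)"
      by (intro continuous_intros continuous_on_subset[OF cont_x] continuous_on_subset[OF cont_q])
          auto
    show "(\<lambda>r. exp (1 * r) * gap_forcing r) integrable_on {0..t}"
      by (rule integrable_exp_gap_forcing[OF t])
  next
    fix s assume s: "s \<in> {0<..<t} - grid_points \<delta> \<inter> {0..t}"
    then have "s > 0" "s \<notin> grid_points \<delta>" by auto
    then show "((\<lambda>s. (norm (x s - q s))^2) has_real_derivative 2 * ((x s - q s) \<bullet> (u s - q' s)))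
        (at s)"
      by (intro has_real_derivative_norm_square derivative_intros x_deriv q_has_derivative)
    show "isCont gap_forcing s" unfolding gap_forcing_def
      using \<open>s > 0\<close> \<open>s \<notin> grid_points \<delta>\<close>
      by (intro continuous_intros isCont_if_continuous_on_Ici[OF cont_e] isCont_comp_grid_floor
          isCont_if_continuous_on_Ici[OF cont_h] \<delta>_pos)
    show "2 * ((x s - q s) \<bullet> (u s - q' s)) \<le> - 1 * (norm (x s - q s))^2 + gap_forcing s"
      using x_minus_q_deriv_bound[of s] \<open>s > 0\<close> by simp
  qed (use t finite_grid_points_Icc[OF \<delta>_pos] in auto)
  then show ?thesis using x_0 q_0 by simp
qed

definition speed_sq :: "real \<Rightarrow> real" where
  "speed_sq r = (norm (u r))^2"

definition window_start :: "real \<Rightarrow> real" where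
  "window_start s = max 0 (s - 2 * \<delta>)"

definition window_energy :: "real \<Rightarrow> real" where
  "window_energy s = integral {window_start s..s} speed_sq"

text \<open>The derivative \<open>2 \<delta> |u s|\<^sup>2 - window_energy s\<close> of \<open>memory\<close> supplies the negative term
  that absorbs the lag \<open>|x s - x (grid_floor \<delta> s)|\<^sup>2 \<le> \<delta> window_energy s\<close>.\<close>

definition memory :: "real \<Rightarrow> real" where
  "memory s = integral {window_start s..s} (\<lambda>r. (r - s + 2 * \<delta>) * speed_sq r)"

lemma speed_sq_nonneg: "0 \<le> speed_sq r"
  unfolding speed_sq_def by simp

lemma continuous_on_speed_sq: "continuous_on {0..} speed_sq"
  unfolding speed_sq_def by (intro continuous_intros cont_u)

lemma window_start_bounds: "s \<ge> 0 \<Longrightarrow> 0 \<le> window_start s \<and> window_start s \<le> s"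
  unfolding window_start_def using \<delta>_pos by auto

lemma integrable_speed_sq_weighted: "0 \<le> p \<Longrightarrow> (\<lambda>r. (r + c) * speed_sq r) integrable_on {p..s}"
  by (intro integrable_continuous_interval continuous_intros
      continuous_on_subset[OF continuous_on_speed_sq]) auto

lemma integrable_speed_sq: "0 \<le> p \<Longrightarrow> speed_sq integrable_on {p..s}"
  by (rule integrable_continuous_interval, rule continuous_on_subset[OF continuous_on_speed_sq]) auto

lemma memory_nonneg:
  assumes s: "s \<ge> 0"
  shows "0 \<le> memory s"
proof -
  have "0 \<le> integral {window_start s..s} (\<lambda>r. (r + (2 * \<delta> - s)) * speed_sq r)"
    using window_start_bounds[OF s] speed_sq_nonneg
    by (intro integral_nonneg integrable_speed_sq_weighted) (auto simp: window_start_def)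
  then show ?thesis unfolding memory_def by (simp add: algebra_simps)
qed

lemma memory_le:
  assumes s: "s \<ge> 0"
  shows "memory s \<le> 2 * \<delta> * window_energy s"
proof -
  have "integral {window_start s..s} (\<lambda>r. (r + (2 * \<delta> - s)) * speed_sq r)
      \<le> integral {window_start s..s} (\<lambda>r. 2 * \<delta> * speed_sq r)"
    using window_start_bounds[OF s] speed_sq_nonneg
    by (intro integral_le integrable_speed_sq_weighted integrable_on_mult_right
        integrable_speed_sq mult_right_mono)
      auto
  then show ?thesis unfolding memory_def window_energy_def by (simp add: algebra_simps)
qed

lemma lag_square_le_integral:
  assumes s: "s \<ge> 0"
  shows "(norm (x s - x (grid_floor \<delta> s)))^2 \<le> \<delta> * integral {grid_floor \<delta> s..s} speed_sq"
proof -
  define g where "g = grid_floor \<delta> s"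
  have g: "0 \<le> g" "g \<le> s" "s < g + \<delta>"
    using grid_floor_bounds[OF \<delta>_pos, of s] grid_floor_nonneg[OF \<delta>_pos s] unfolding g_def by auto
  have "(u has_integral (x s - x g)) {g..s}"
    by (rule fundamental_theorem_of_calculus_interior)
      (use g x_deriv in \<open>auto intro: continuous_on_subset[OF cont_x]\<close>)
  then have "(norm (x s - x g))^2 \<le> (s - g) * integral {g..s} speed_sq"
    unfolding speed_sq_def
        using norm_integral_square_le[of g s u] g continuous_on_subset[OF cont_u, of "{g..s}"]
    by (auto simp: integral_unique)
  also have "\<dots> \<le> \<delta> * integral {g..s} speed_sq"
    using g speed_sq_nonneg by (intro mult_right_mono integral_nonneg integrable_speed_sq) auto
  finally show ?thesis unfolding g_def .
qed

lemma lag_square_le: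
  assumes s: "s \<ge> 0"
  shows "(norm (x s - x (grid_floor \<delta> s)))^2 \<le> \<delta> * window_energy s"
proof -
  have "integral {grid_floor \<delta> s..s} speed_sq \<le> window_energy s"
    unfolding window_energy_def using grid_floor_bounds[OF \<delta>_pos, of s] grid_floor_nonneg[OF \<delta>_pos s]
      window_start_bounds[OF s] speed_sq_nonneg
    by (intro integral_subset_le integrable_speed_sq) (auto simp: window_start_def)
  then show ?thesis using lag_square_le_integral[OF s] \<delta>_pos
      by (meson mult_left_mono less_imp_le order_trans)
qed

definition energy :: "real \<Rightarrow> real" where
  "energy s = integral {0..s} speed_sq"

definition weighted_energy :: "real \<Rightarrow> real" where
  "weighted_energy s = integral {0..s} (\<lambda>r. (r + 2 * \<delta>) * speed_sq r)"

lemma energy_deriv: "s > 0 \<Longrightarrow> (energy has_real_derivative speed_sq s) (at s)"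
  unfolding energy_def has_real_derivative_iff_has_vector_derivative
  by (rule indefinite_integral_has_vector_derivative_at[OF continuous_on_speed_sq])

lemma weighted_energy_deriv: "s > 0 \<Longrightarrow>
    (weighted_energy has_real_derivative (s + 2 * \<delta>) * speed_sq s) (at s)"
  unfolding weighted_energy_def has_real_derivative_iff_has_vector_derivative
  by (rule indefinite_integral_has_vector_derivative_at)
      (intro continuous_intros continuous_on_speed_sq)

lemma window_energy_eq:
  "s \<ge> 0 \<Longrightarrow> window_energy s = energy s - energy (window_start s)"
  unfolding window_energy_def energy_def using window_start_bounds[of s]
    Henstock_Kurzweil_Integration.integral_combine[of 0 "window_start s" s speed_sq]
        integrable_speed_sq[of 0 s]
  by simp

lemma memory_eq:
  assumes s: "s \<ge> 0"
  shows "memory s = (weighted_energy s - weighted_energy (window_start s)) - s * window_energy s"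
proof -
  have "memory s = integral {window_start s..s} (\<lambda>r. (r + 2 * \<delta>) * speed_sq r - s * speed_sq r)"
    unfolding memory_def by (simp add: algebra_simps)
  also have "\<dots> = integral {window_start s..s} (\<lambda>r. (r + 2 * \<delta>) * speed_sq r) - s * window_energy s"
    unfolding window_energy_def using window_start_bounds[OF s]
    by (simp add: integral_diff integrable_speed_sq_weighted integrable_on_mult_right
        integrable_speed_sq)
  also have "integral {window_start s..s} (\<lambda>r. (r + 2 * \<delta>) * speed_sq r)
      = weighted_energy s - weighted_energy (window_start s)"
    unfolding weighted_energy_def
        using window_start_bounds[OF s] integrable_speed_sq_weighted[of 0 "2 * \<delta>" s]
      Henstock_Kurzweil_Integration.integral_combine
        [of 0 "window_start s" s "\<lambda>r. (r + 2 * \<delta>) * speed_sq r"]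
    by simp
  finally show ?thesis .
qed

lemma memory_deriv_early:
  assumes s: "0 < s" "s < 2 * \<delta>"
  shows "(memory has_real_derivative (2 * \<delta> * speed_sq s - window_energy s)) (at s)"
proof -
  have "((\<lambda>r. weighted_energy r - r * energy r) has_real_derivative
      (s + 2 * \<delta>) * speed_sq s - (1 * energy s + speed_sq s * s)) (at s)"
    by (intro DERIV_diff DERIV_mult DERIV_ident weighted_energy_deriv energy_deriv s)
  moreover have "window_energy s = energy s"
    using s window_energy_eq[of s] by (simp add: window_start_def energy_def)
  ultimately have "((\<lambda>r. weighted_energy r - r * energy r) has_real_derivative
      2 * \<delta> * speed_sq s - window_energy s) (at s)"
    by (elim DERIV_cong) (simp add: algebra_simps)
  then show ?thesis
  proof (rule has_field_derivative_transform_within_open[where S="{0<..<2 * \<delta>}"])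
    fix r assume "r \<in> {0<..<2 * \<delta>}"
    then show "weighted_energy r - r * energy r = memory r"
      using memory_eq[of r] window_energy_eq[of r]
          by (simp add: window_start_def energy_def weighted_energy_def)
  qed (use s in auto)
qed

lemma memory_deriv_late:
  assumes s: "s > 2 * \<delta>"
  shows "(memory has_real_derivative (2 * \<delta> * speed_sq s - window_energy s)) (at s)"
proof -
  define F where "F r = (weighted_energy r - weighted_energy (r - 2 * \<delta>))
    - r * (energy r - energy (r - 2 * \<delta>))" for r
  have s': "s - 2 * \<delta> > 0" and s0: "s > 0" using s \<delta>_pos by simp_all
  have shift: "((\<lambda>r. r - 2 * \<delta>) has_real_derivative 1) (at s)"
    by (auto intro!: derivative_eq_intros)
  note weighted_energy' = DERIV_chain2[OF weighted_energy_deriv[OF s'] shift]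
    and energy' = DERIV_chain2[OF energy_deriv[OF s'] shift]
  \<comment> \<open>the boundary term at the window start vanishes since its weight is \<open>0\<close> there\<close>
  have "(F has_real_derivative ((s + 2 * \<delta>) * speed_sq s - (s - 2 * \<delta> + 2 * \<delta>) * speed_sq (s - 2 * \<delta>) * 1)
      - (1 * (energy s - energy (s - 2 * \<delta>)) + (speed_sq s - speed_sq (s - 2 * \<delta>) * 1) * s)) (at s)"
    unfolding F_def[abs_def]
    by (intro DERIV_diff DERIV_mult DERIV_ident weighted_energy_deriv energy_deriv s0 weighted_energy' energy')
  moreover have "window_energy s = energy s - energy (s - 2 * \<delta>)"
    using s0 s window_energy_eq[of s] by (simp add: window_start_def)
  ultimately have "(F has_real_derivative 2 * \<delta> * speed_sq s - window_energy s) (at s)"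
    by (elim DERIV_cong) (simp add: algebra_simps)
  then show ?thesis
  proof (rule has_field_derivative_transform_within_open[where S="{2 * \<delta><..}"])
    fix r assume "r \<in> {2 * \<delta><..}"
    then show "F r = memory r"
      unfolding F_def using memory_eq[of r] window_energy_eq[of r] \<delta>_pos by (simp add: window_start_def)
  qed (use s in auto)
qed

lemma memory_deriv:
  assumes "s > 0" "s \<noteq> 2 * \<delta>"
  shows "(memory has_real_derivative (2 * \<delta> * speed_sq s - window_energy s)) (at s)"
  using assms memory_deriv_early memory_deriv_late by (cases "s < 2 * \<delta>") auto

lemma memory_zero: "memory 0 = 0"
  unfolding memory_def window_start_def using \<delta>_pos by simp

lemma continuous_on_memory: "continuous_on {0..t} memory"
proof -
  have energy: "continuous_on {0..t} energy"
    and weighted_energy: "continuous_on {0..t} weighted_energy"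
    unfolding energy_def weighted_energy_def
    by (intro indefinite_integral_continuous_1 integrable_speed_sq integrable_speed_sq_weighted;
        simp)+
  have "continuous_on {0..t} window_start" and "window_start ` {0..t} \<subseteq> {0..t}"
    unfolding window_start_def using \<delta>_pos by (auto intro!: continuous_intros)
  then have "continuous_on {0..t} (\<lambda>s. energy (window_start s))"
    and "continuous_on {0..t} (\<lambda>s. weighted_energy (window_start s))"
    using continuous_on_compose2[OF energy] continuous_on_compose2[OF weighted_energy] by auto
  then have "continuous_on {0..t} (\<lambda>s. (weighted_energy s - weighted_energy (window_start s))
      - s * (energy s - energy (window_start s)))"
    by (intro continuous_intros energy weighted_energy)
  then show ?thesis
    by (rule continuous_on_cong[THEN iffD1, rotated 2])
      (simp_all add: memory_eq window_energy_eq)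
qed

definition lyapunov_forcing :: "real \<Rightarrow> real" where
  "lyapunov_forcing r = a * (L + m) * R^2 + (8 / (a * m) + 1) * (norm (h r))^2 + 2 * (norm (e r))^2"

lemma lyapunov_forcing_nonneg: "0 \<le> lyapunov_forcing r"
  unfolding lyapunov_forcing_def using a_pos m_pos L_pos by simp

lemma integrable_exp_lyapunov_forcing: "(\<lambda>r. exp (c * r) * lyapunov_forcing r) integrable_on {0..t}"
  unfolding lyapunov_forcing_def
  by (intro integrable_continuous_interval continuous_intros
      continuous_on_subset[OF cont_e] continuous_on_subset[OF cont_h]) auto

text \<open>In the next three estimates \<open>X, Q, W, D, E, H\<close> stand for \<open>|x s|\<close>, \<open>|q s|\<close>,
  \<open>|x s - q s|\<close>, \<open>|x s - x (grid_floor \<delta> s)|\<close>, \<open>|e s|\<close> and \<open>|h s|\<close>.\<close>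

lemma drift_terms_bound:
  fixes X Q W D qG wG :: real
  assumes nonneg: "0 \<le> X" "0 \<le> W" "0 \<le> D"
    and qG: "qG \<ge> m * X^2 - (L + m) * R^2 - L * W * X - L * Q * D"
    and wG: "wG \<le> L * W * (X + D)"
    and Q: "Q \<le> X + W"
  shows "a * wG - a * qG \<le> a * (L + m) * R^2 + W^2 / 200 + D^2 / 500 - (a * m / 2) * X^2"
proof -
  have am: "a * m > 0" using a_pos m_pos by simp
  have ratio: "(a * L)^2 / (a * m) = 1 / 1000"
    using a_L_sq a_pos m_pos by (simp add: power2_eq_square field_simps)
  have "a * wG - a * qG \<le>
      a * (L * W * (X + D)) - a * (m * X^2 - (L + m) * R^2 - L * W * X - L * Q * D)"
    using wG qG a_pos by (intro diff_mono mult_left_mono) auto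
  then have total: "a * wG - a * qG \<le> - (a * m * X^2) + a * (L + m) * R^2 + 2 * (a * L * W * X)
      + a * L * Q * D + a * L * W * D"
    by (simp add: algebra_simps)
  have "a * L * D * Q \<le> a * L * D * (X + W)"
    using Q a_pos L_pos nonneg by (intro mult_left_mono) auto
  then have QD: "a * L * Q * D \<le> a * L * X * D + a * L * W * D"
    by (simp add: algebra_simps)
  have "2 * X * (a * L * W) \<le> (a * m / 4) * X^2 + (a * L * W)^2 / (a * m / 4)"
    using am by (intro two_mult_le_weighted_squares) simp
  also have "(a * L * W)^2 / (a * m / 4) = 4 * ((a * L)^2 / (a * m)) * W^2"
    using am by (simp add: power_mult_distrib field_simps)
  finally have WX: "2 * (a * L * W * X) \<le> a * m * X^2 / 4 + W^2 / 250"
    unfolding ratio by (simp add: algebra_simps)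
  have "2 * X * (a * L * D) \<le> (a * m / 2) * X^2 + (a * L * D)^2 / (a * m / 2)"
    using am by (intro two_mult_le_weighted_squares) simp
  also have "(a * L * D)^2 / (a * m / 2) = 2 * ((a * L)^2 / (a * m)) * D^2"
    using am by (simp add: power_mult_distrib field_simps)
  finally have XD: "a * L * X * D \<le> a * m * X^2 / 4 + D^2 / 1000"
    unfolding ratio by (simp add: algebra_simps)
  have "(a * L) * (2 * W * D) \<le> (1 / 1000) * (W^2 + D^2)"
    using a_L_le a_pos L_pos sum_squares_bound[of W D] nonneg by (intro mult_mono) auto
  then have WD: "2 * (a * L * W * D) \<le> W^2 / 1000 + D^2 / 1000"
    by (simp add: algebra_simps)
  have "- (a * m / 2) * X^2 = - (a * m * X^2) / 2" by simp
  then show ?thesis using total QD WX XD WD by linarith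
qed

lemma q_noise_bound:
  fixes X Q W H qh :: real
  assumes qh: "qh \<le> Q * H" and Q: "Q^2 \<le> 2 * X^2 + 2 * W^2"
  shows "2 * qh \<le> (a * m / 2) * X^2 - (a * m / 8) * Q^2 + W^2 / 2000 + (8 / (a * m)) * H^2"
proof -
  have am: "a * m > 0" using a_pos m_pos by simp
  have "2 * Q * H \<le> (a * m / 8) * Q^2 + H^2 / (a * m / 8)"
    using am by (intro two_mult_le_weighted_squares) simp
  moreover have "H^2 / (a * m / 8) = (8 / (a * m)) * H^2" by simp
  moreover have "(a * m / 4) * Q^2 \<le> (a * m / 4) * (2 * X^2 + 2 * W^2)"
    using Q am by (intro mult_left_mono) auto
  moreover have "(a * m) * W^2 \<le> (1 / 1000) * W^2"
    using a_m_le by (intro mult_right_mono) auto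
  ultimately show ?thesis using qh by (simp add: algebra_simps)
qed

lemma memory_deriv_bound:
  fixes W E D Uv Jv Tv :: real
  assumes "0 \<le> Tv" and U: "Uv \<le> 8 * W^2 + 2 * E^2"
    and D: "D^2 \<le> \<delta> * Jv" and T: "Tv \<le> 2 * \<delta> * Jv"
  shows "(\<delta> / 100) * (2 * \<delta> * Uv - Jv) \<le>
      W^2 / 1000 + E^2 - D^2 / 200 - (a * m / 8) * ((\<delta> / 100) * Tv)"
proof -
  define Y where "Y = \<delta> * \<delta> * Uv"
  define Z where "Z = \<delta> * Jv"
  define K where "K = a * m * \<delta> * Tv"
  have "\<delta> * \<delta> \<le> 1 / 1000" using \<delta>_le \<delta>_pos mult_mono[OF \<delta>_le \<delta>_le] by simp
  have "Y \<le> \<delta> * \<delta> * (8 * W^2 + 2 * E^2)"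
    unfolding Y_def using U by (intro mult_left_mono) auto
  also have "\<dots> \<le> (1 / 1000) * (8 * W^2 + 2 * E^2)"
    using \<open>\<delta> * \<delta> \<le> 1 / 1000\<close> by (intro mult_right_mono) auto
  finally have Y: "1000 * Y \<le> 8 * W^2 + 2 * E^2" by simp
  have "a * m * \<delta> \<le> 1" using a_pos m_pos \<delta>_pos mult_mono[OF a_m_le \<delta>_le] by simp
  then have K: "K \<le> Tv" and "0 \<le> K"
    unfolding K_def using \<open>0 \<le> Tv\<close> a_pos m_pos \<delta>_pos mult_right_mono[of "a * m * \<delta>" 1 Tv] by auto
  have "D^2 \<le> Z" "Tv \<le> 2 * Z" using D T unfolding Z_def by simp_all
  moreover have rescale: "(\<delta> / 100) * (2 * \<delta> * Uv - Jv) = Y / 50 - Z / 100"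
    "(a * m / 8) * ((\<delta> / 100) * Tv) = K / 800"
    unfolding Y_def Z_def K_def by (simp_all add: field_simps)
  ultimately show ?thesis
    unfolding rescale using Y K \<open>0 \<le> K\<close> zero_le_power2[of W] zero_le_power2[of E] by linarith
qed

lemma inner_q_drift_lower:
  "q s \<bullet> G (x (grid_floor \<delta> s)) \<ge> m * (norm (x s))^2 - (L + m) * R^2
     - L * norm (x s - q s) * norm (x s) - L * norm (q s) * norm (x s - x (grid_floor \<delta> s))"
proof -
  define \<Gamma> where "\<Gamma> = G (x (grid_floor \<delta> s))"
  have "(x s - q s) \<bullet> G (x s) \<le> norm (x s - q s) * norm (G (x s))"
    by (rule norm_cauchy_schwarz)
  also have "\<dots> \<le> norm (x s - q s) * (L * norm (x s))"
    by (intro mult_left_mono G_bound) simp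
  finally have wG: "(x s - q s) \<bullet> G (x s) \<le> L * norm (x s - q s) * norm (x s)"
    by (simp add: algebra_simps)
  have "- (q s \<bullet> (\<Gamma> - G (x s))) \<le> norm (q s) * norm (\<Gamma> - G (x s))"
    using norm_cauchy_schwarz[of "- q s" "\<Gamma> - G (x s)"] by simp
  also have "\<dots> \<le> norm (q s) * (L * norm (x s - x (grid_floor \<delta> s)))"
    unfolding \<Gamma>_def using G_Lipschitz[of "x (grid_floor \<delta> s)" "x s"]
    by (intro mult_left_mono) (auto simp: norm_minus_commute)
  finally have qD: "- (q s \<bullet> (\<Gamma> - G (x s))) \<le> L * norm (q s) * norm (x s - x (grid_floor \<delta> s))"
    by (simp add: algebra_simps)
  have "q s \<bullet> \<Gamma> = x s \<bullet> G (x s) - (x s - q s) \<bullet> G (x s) + q s \<bullet> (\<Gamma> - G (x s))"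
    by (simp add: inner_diff_left inner_diff_right)
  then show ?thesis using G_dissipative[of "x s"] wG qD unfolding \<Gamma>_def by linarith
qed

lemma inner_w_drift_upper:
  "(x s - q s) \<bullet> G (x (grid_floor \<delta> s)) \<le>
     L * norm (x s - q s) * (norm (x s) + norm (x s - x (grid_floor \<delta> s)))"
proof -
  have "(x s - q s) \<bullet> G (x (grid_floor \<delta> s)) \<le> norm (x s - q s) * norm (G (x (grid_floor \<delta> s)))"
    by (rule norm_cauchy_schwarz)
  also have "\<dots> \<le> norm (x s - q s) * (L * (norm (x s) + norm (x s - x (grid_floor \<delta> s))))"
    using G_bound[of "x (grid_floor \<delta> s)"]
        norm_triangle_ineq4[of "x s" "x s - x (grid_floor \<delta> s)"] L_pos
    by (intro mult_left_mono) (auto intro: order_trans)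
  finally show ?thesis by (simp add: algebra_simps)
qed

lemma speed_sq_le: "s \<ge> 0 \<Longrightarrow> speed_sq s \<le> 8 * (norm (x s - q s))^2 + 2 * (norm (e s))^2"
  unfolding speed_sq_def u_eq using norm_add_square_le[of "(-2) *\<^sub>R (x s - q s)" "e s"]
  by (simp add: power_mult_distrib)

lemma lyapunov_deriv_expand:
  assumes "s \<ge> 0"
  shows "2 * (q s \<bullet> q' s) + 2 * ((x s - q s) \<bullet> (u s - q' s)) =
    2 * (q s \<bullet> h s) - a * (q s \<bullet> G (x (grid_floor \<delta> s))) + (-4 * (norm (x s - q s))^2
      + 2 * ((x s - q s) \<bullet> e s) + a * ((x s - q s) \<bullet> G (x (grid_floor \<delta> s)))
      - 2 * ((x s - q s) \<bullet> h s))"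
  unfolding u_minus_q'_eq[OF assms] unfolding q'_def
  by (simp add: inner_add_right inner_diff_right power2_norm_eq_inner algebra_simps)

lemma lyapunov_deriv_bound:
  assumes s: "s \<ge> 0"
  shows "2 * (q s \<bullet> q' s) + 2 * ((x s - q s) \<bullet> (u s - q' s))
      + (\<delta> / 100) * (2 * \<delta> * speed_sq s - window_energy s)
    \<le> - (a * m / 8) * ((norm (q s))^2 + (norm (x s - q s))^2 + (\<delta> / 100) * memory s)
        + lyapunov_forcing s"
proof -
  define w where "w = x s - q s"
  define \<Gamma> where "\<Gamma> = G (x (grid_floor \<delta> s))"
  define X where "X = norm (x s)"
  define Q where "Q = norm (q s)"
  define W where "W = norm w"
  define D where "D = norm (x s - x (grid_floor \<delta> s))"
  define E where "E = norm (e s)"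
  define H where "H = norm (h s)"
  have drift: "a * (w \<bullet> \<Gamma>) - a * (q s \<bullet> \<Gamma>)
      \<le> a * (L + m) * R^2 + W^2 / 200 + D^2 / 500 - (a * m / 2) * X^2"
  proof (rule drift_terms_bound)
    show "Q \<le> X + W" unfolding Q_def X_def W_def w_def
        using norm_triangle_ineq4[of "x s" "x s - q s"] by simp
  qed (use inner_q_drift_lower[of s] inner_w_drift_upper[of s] in \<open>auto simp: X_def Q_def W_def
      D_def w_def \<Gamma>_def\<close>)
  have noise: "2 * (q s \<bullet> h s) \<le> (a * m / 2) * X^2 - (a * m / 8) * Q^2 + W^2 / 2000
      + (8 / (a * m)) * H^2"
  proof (rule q_noise_bound)
    show "q s \<bullet> h s \<le> Q * H" unfolding Q_def H_def by (rule norm_cauchy_schwarz)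
    have "Q^2 \<le> (X + W)^2"
      unfolding Q_def X_def W_def w_def using norm_triangle_ineq4[of "x s" "x s - q s"]
          by (intro power_mono) auto
    then show "Q^2 \<le> 2 * X^2 + 2 * W^2" using sum_squares_bound[of X W] by (simp add: power2_sum)
  qed
  have mem: "(\<delta> / 100) * (2 * \<delta> * speed_sq s - window_energy s)
      \<le> W^2 / 1000 + E^2 - D^2 / 200 - (a * m / 8) * ((\<delta> / 100) * memory s)"
    using memory_deriv_bound memory_nonneg[OF s] speed_sq_le[OF s] lag_square_le[OF s] memory_le[OF s]
    unfolding W_def w_def E_def D_def by blast
  have we: "2 * (w \<bullet> e s) \<le> W^2 + E^2" and wh: "- 2 * (w \<bullet> h s) \<le> W^2 + H^2"
    using norm_cauchy_schwarz[of w "e s"] norm_cauchy_schwarz[of w "- h s"]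
      sum_squares_bound[of W E] sum_squares_bound[of W H] unfolding W_def E_def H_def by auto
  have "(a * m / 8) * W^2 \<le> (1 / 8000) * W^2"
    using a_m_le by (intro mult_right_mono) auto
  moreover have "- (a * m / 8) * (Q^2 + W^2 + (\<delta> / 100) * memory s) + lyapunov_forcing s
      = a * (L + m) * R^2 + (8 / (a * m)) * H^2 + H^2 + 2 * E^2
        - (a * m / 8) * Q^2 - (a * m / 8) * W^2 - (a * m / 8) * ((\<delta> / 100) * memory s)"
    unfolding lyapunov_forcing_def H_def E_def by (simp add: algebra_simps)
  ultimately show ?thesis
    unfolding lyapunov_deriv_expand[OF s]
    unfolding w_def[symmetric] \<Gamma>_def[symmetric] W_def[symmetric] Q_def[symmetric]
    using drift noise mem we wh zero_le_power2[of W] zero_le_power2[of D] by linarith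
qed

lemma lyapunov_bound:
  assumes t: "0 \<le> t"
  shows "(norm (q t))^2 + (norm (x t - q t))^2 \<le>
         exp (- (a * m / 8) * t)
             * ((norm x0)^2 + integral {0..t} (\<lambda>r. exp ((a * m / 8) * r) * lyapunov_forcing r))"
proof -
  define c where "c = a * m / 8"
  define V where "V s = (norm (q s))^2 + (norm (x s - q s))^2 + (\<delta> / 100) * memory s" for s
  have "V t \<le> exp (- c * t) * (V 0 + integral {0..t} (\<lambda>r. exp (c * r) * lyapunov_forcing r))"
  proof (rule gronwall_except_finite[where S="(grid_points \<delta> \<inter> {0..t}) \<union> {2 * \<delta>}"
        and V'="\<lambda>s. 2 * (q s \<bullet> q' s) + 2 * ((x s - q s) \<bullet> (u s - q' s))
                  + (\<delta> / 100) * (2 * \<delta> * speed_sq s - window_energy s)"])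
    show "continuous_on {0..t} V" unfolding V_def
      by (intro continuous_intros continuous_on_subset[OF cont_x] continuous_on_subset[OF cont_q]
          continuous_on_memory) auto
    show "(\<lambda>r. exp (c * r) * lyapunov_forcing r) integrable_on {0..t}"
      by (rule integrable_exp_lyapunov_forcing)
  next
    fix s assume s: "s \<in> {0<..<t} - (grid_points \<delta> \<inter> {0..t} \<union> {2 * \<delta>})"
    then have "s > 0" "s \<notin> grid_points \<delta>" "s \<noteq> 2 * \<delta>" by auto
    then have q': "(q has_vector_derivative q' s) (at s)" by (intro q_has_derivative)
    show "(V has_real_derivative 2 * (q s \<bullet> q' s) + 2 * ((x s - q s) \<bullet> (u s - q' s))
        + (\<delta> / 100) * (2 * \<delta> * speed_sq s - window_energy s)) (at s)"
      unfolding V_def using \<open>s > 0\<close> \<open>s \<noteq> 2 * \<delta>\<close>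
      by (intro DERIV_add DERIV_cmult has_real_derivative_norm_square q' memory_deriv
          derivative_intros x_deriv)
    show "isCont lyapunov_forcing s" unfolding lyapunov_forcing_def using \<open>s > 0\<close>
      by (intro continuous_intros isCont_if_continuous_on_Ici[OF cont_e]
          isCont_if_continuous_on_Ici[OF cont_h])
    show "2 * (q s \<bullet> q' s) + 2 * ((x s - q s) \<bullet> (u s - q' s))
        + (\<delta> / 100) * (2 * \<delta> * speed_sq s - window_energy s) \<le> - c * V s + lyapunov_forcing s"
      using lyapunov_deriv_bound[of s] \<open>s > 0\<close> unfolding V_def c_def by simp
  qed (use t finite_grid_points_Icc[OF \<delta>_pos] in auto)
  moreover have "V 0 = (norm x0)^2" unfolding V_def using x_0 q_0 memory_zero by simp
  moreover have "(norm (q t))^2 + (norm (x t - q t))^2 \<le> V t"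
    unfolding V_def using memory_nonneg[OF t] \<delta>_pos by simp
  ultimately show ?thesis unfolding c_def by simp
qed

end

section \<open>Splitting the velocity of a discretized Langevin path\<close>

definition extend0 :: "(real \<Rightarrow> 'v) \<Rightarrow> real \<Rightarrow> 'v" where
  "extend0 f r = f (max 0 r)"

definition moving_average :: "(real \<Rightarrow> 'v::euclidean_space) \<Rightarrow> real \<Rightarrow> 'v" where
  "moving_average f s = integral {s - 1..s} (extend0 f)"

lemma continuous_on_extend0:
  "continuous_on {0..} f \<Longrightarrow> continuous_on UNIV (extend0 f)"
  unfolding extend0_def by (rule continuous_on_compose2) (auto intro!: continuous_intros)

lemma moving_average_eq:
  fixes f :: "real \<Rightarrow> 'v::euclidean_space"
  assumes f: "continuous_on {0..} f" and s: "s \<ge> 0"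
  shows "moving_average f s = integral {-1..s} (extend0 f) - integral {-1..s - 1} (extend0 f)"
proof -
  have "integral {-1..s - 1} (extend0 f) + integral {s - 1..s} (extend0 f)
      = integral {-1..s} (extend0 f)"
    using s by (intro Henstock_Kurzweil_Integration.integral_combine integrable_continuous_interval
        continuous_on_subset[OF continuous_on_extend0[OF f]]) auto
  then show ?thesis unfolding moving_average_def by (simp add: algebra_simps)
qed

lemma moving_average_zero:
  assumes "f 0 = 0"
  shows "moving_average f 0 = 0"
proof -
  have "integral {-1..0} (extend0 f) = integral {-1..0::real} (\<lambda>r. 0)"
    by (rule integral_cong) (use assms in \<open>auto simp: extend0_def\<close>)
  then show ?thesis unfolding moving_average_def by simp
qed

lemma moving_average_has_derivative:
  fixes f :: "real \<Rightarrow> 'v::euclidean_space"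
  assumes f: "continuous_on {0..} f" and s: "s > 0"
  shows "(moving_average f has_vector_derivative (extend0 f s - extend0 f (s - 1))) (at s)"
proof -
  have c: "continuous_on {-1..} (extend0 f)"
    using continuous_on_extend0[OF f] by (rule continuous_on_subset) auto
  have "((\<lambda>r. integral {-1..r} (extend0 f)) has_vector_derivative extend0 f (s - 1)) (at (s - 1))"
    by (rule indefinite_integral_has_vector_derivative_at[OF c]) (use s in auto)
  then have "((\<lambda>r. integral {-1..r} (extend0 f)) \<circ> (\<lambda>r. r - 1)
      has_vector_derivative 1 *\<^sub>R extend0 f (s - 1)) (at s)"
    by (intro vector_diff_chain_at derivative_eq_intros) auto
  then have "((\<lambda>r. integral {-1..r - 1} (extend0 f)) has_vector_derivative extend0 f (s - 1)) (at s)"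
    by (simp add: o_def)
  then have
      "((\<lambda>r. integral {-1..r} (extend0 f) - integral {-1..r - 1} (extend0 f)) has_vector_derivative
      extend0 f s - extend0 f (s - 1)) (at s)"
    by (intro derivative_intros indefinite_integral_has_vector_derivative_at[OF c]) (use s in auto)
  then show ?thesis
    by (rule has_vector_derivative_transform_within_open[where S="{0<..}"])
      (use s moving_average_eq[OF f] in auto)
qed

lemma continuous_on_moving_average:
  fixes f :: "real \<Rightarrow> 'v::euclidean_space"
  assumes f: "continuous_on {0..} f"
  shows "continuous_on {0..} (moving_average f)"
proof (rule continuous_on_Ici_if_continuous_on_intervals)
  fix b :: real
  have c: "continuous_on {-1..max b 0} (\<lambda>r. integral {-1..r} (extend0 f))"
    by (intro indefinite_integral_continuous_1 integrable_continuous_interval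
        continuous_on_subset[OF continuous_on_extend0[OF f]]) auto
  have "continuous_on {0..b} (\<lambda>r. integral {-1..r} (extend0 f) - integral {-1..r - 1} (extend0 f))"
    by (intro continuous_intros continuous_on_subset[OF c] continuous_on_compose2[OF c]) auto
  then show "continuous_on {0..b} (moving_average f)"
    by (rule continuous_on_cong[THEN iffD1, rotated 2]) (simp_all add: moving_average_eq[OF f])
qed

locale langevin_path = langevin_drift G L m R a \<delta>
  for G :: "'v::euclidean_space \<Rightarrow> 'v" and L m R a \<delta> :: real +
  fixes \<sigma> :: real and x0 :: 'v and B X U :: "real \<Rightarrow> 'v"
  assumes B_zero: "B 0 = 0" and cont_B: "continuous_on {0..} B"
    and cont_X: "continuous_on {0..} X" and cont_U: "continuous_on {0..} U"
    and X_eq: "\<And>s. s \<ge> 0 \<Longrightarrow> X s = x0 + integral {0..s} U"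
    and U_eq: "\<And>s. s \<ge> 0 \<Longrightarrow>
       U s = integral {0..s} (\<lambda>r. (-2) *\<^sub>R U r - a *\<^sub>R G (X (grid_floor \<delta> r))) + \<sigma> *\<^sub>R B s"
begin

definition drift_term :: "real \<Rightarrow> 'v" where
  "drift_term r = (-2) *\<^sub>R U r - a *\<^sub>R G (X (grid_floor \<delta> r))"

text \<open>By the two integral equations, \<open>smoothed_position = X + (U - noise_residual) / 2\<close>: removing the
  deviation of \<open>B\<close> from its moving average replaces the white noise \<open>\<sigma> B'\<close> in \<open>U'\<close> by the
  increment of \<open>B\<close> over the last unit of time.\<close>

definition smoothed_position :: "real \<Rightarrow> 'v" where
  "smoothed_position s = x0 + integral {0..s} U + (1 / 2) *\<^sub>R integral {0..s} drift_term
     + (\<sigma> / 2) *\<^sub>R moving_average B s"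

definition noise_residual :: "real \<Rightarrow> 'v" where
  "noise_residual s = \<sigma> *\<^sub>R (extend0 B s - moving_average B s)"

definition noise_increment :: "real \<Rightarrow> 'v" where
  "noise_increment s = (\<sigma> / 2) *\<^sub>R (extend0 B s - extend0 B (s - 1))"

lemma integrable_drift_term: "drift_term integrable_on {0..b}"
proof (cases "b \<ge> 0")
  case True
  show ?thesis unfolding drift_term_def
    by (rule integrable_on_comp_grid_floor[OF \<delta>_pos True, where F="\<lambda>r y. (-2) *\<^sub>R U r - a *\<^sub>R G (X y)"])
      (intro continuous_intros continuous_on_subset[OF cont_U]; auto)
qed (simp add: integrable_on_empty)

lemma integrable_U: "U integrable_on {0..b}"
  by (rule integrable_continuous_interval, rule continuous_on_subset[OF cont_U]) auto

lemma continuous_on_smoothed_position: "continuous_on {0..} smoothed_position"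
proof -
  have "continuous_on {0..} (\<lambda>s. x0 + integral {0..s} U + (1 / 2) *\<^sub>R integral {0..s} drift_term)"
    by (rule continuous_on_Ici_if_continuous_on_intervals)
      (intro continuous_intros indefinite_integral_continuous_1 integrable_U integrable_drift_term)
  then show ?thesis unfolding smoothed_position_def[abs_def]
    by (rule continuous_on_add) (intro continuous_intros continuous_on_moving_average cont_B)
qed

lemma X_has_derivative:
  assumes s: "s > 0"
  shows "(X has_vector_derivative U s) (at s)"
proof -
  have "((\<lambda>r. x0 + integral {0..r} U) has_vector_derivative U s) (at s)"
    using indefinite_integral_has_vector_derivative_at[OF cont_U s]
        by (intro derivative_eq_intros) auto
  then show ?thesis
    by (rule has_vector_derivative_transform_within_open[where S="{0<..}"]) (use s X_eq in auto)
qed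

lemma drift_integral_has_derivative:
  assumes s: "s > 0" and sg: "s \<notin> grid_points \<delta>"
  shows "((\<lambda>r. integral {0..r} drift_term) has_vector_derivative drift_term s) (at s)"
proof (rule integral_has_vector_derivative_at_isCont[OF integrable_drift_term[of "s + 1"]])
  show "isCont drift_term s" unfolding drift_term_def[abs_def]
    by (rule continuous_diff[OF
        continuous_scaleR[OF continuous_const isCont_if_continuous_on_Ici[OF cont_U s]]
          continuous_scaleR[OF continuous_const isCont_comp_grid_floor[OF \<delta>_pos sg]]])
qed (use s in auto)

lemma smoothed_position_has_derivative:
  assumes s: "s > 0" and sg: "s \<notin> grid_points \<delta>"
  shows "(smoothed_position has_vector_derivative
          (- (a / 2)) *\<^sub>R G (X (grid_floor \<delta> s)) + noise_increment s) (at s)"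
proof -
  have "(smoothed_position has_vector_derivative
      U s + (1 / 2) *\<^sub>R drift_term s + (\<sigma> / 2) *\<^sub>R (extend0 B s - extend0 B (s - 1))) (at s)"
    unfolding smoothed_position_def[abs_def]
    using indefinite_integral_has_vector_derivative_at[OF cont_U s]
        drift_integral_has_derivative[OF s sg]
      moving_average_has_derivative[OF cont_B s]
    by (intro derivative_eq_intros) auto
  then show ?thesis unfolding drift_term_def noise_increment_def by (simp add: algebra_simps)
qed

sublocale langevin_split G L m R a \<delta> x0 X U smoothed_position noise_residual noise_increment
proof
  show "continuous_on {0..} X" "continuous_on {0..} U" "continuous_on {0..} smoothed_position"
    by (fact cont_X cont_U continuous_on_smoothed_position)+
  show "continuous_on {0..} noise_residual" unfolding noise_residual_def[abs_def]
    by (intro continuous_intros continuous_on_moving_average cont_B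
        continuous_on_subset[OF continuous_on_extend0[OF cont_B]]) auto
  show "continuous_on {0..} noise_increment" unfolding noise_increment_def[abs_def]
    by (intro continuous_intros continuous_on_compose2[OF continuous_on_extend0[OF cont_B]]) auto
  show "\<And>s. s > 0 \<Longrightarrow> (X has_vector_derivative U s) (at s)" by (fact X_has_derivative)
  show "\<And>s. s > 0 \<Longrightarrow> s \<notin> grid_points \<delta> \<Longrightarrow> (smoothed_position has_vector_derivative
      (- (a / 2)) *\<^sub>R G (X (grid_floor \<delta> s)) + noise_increment s) (at s)"
    by (fact smoothed_position_has_derivative)
  show "U s = 2 *\<^sub>R (smoothed_position s - X s) + noise_residual s" if s: "s \<ge> 0" for s
  proof -
    have "2 *\<^sub>R (smoothed_position s - X s) = integral {0..s} drift_term + \<sigma> *\<^sub>R moving_average B s"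
      unfolding smoothed_position_def X_eq[OF s] by (simp add: scaleR_add_right)
    moreover have "U s = integral {0..s} drift_term + \<sigma> *\<^sub>R extend0 B s"
      using U_eq[OF s] s unfolding drift_term_def[abs_def] extend0_def by simp
    ultimately show ?thesis unfolding noise_residual_def by (simp add: scaleR_diff_right)
  qed
  show "X 0 = x0" using X_eq[of 0] by simp
  show "smoothed_position 0 = x0" unfolding smoothed_position_def
      using moving_average_zero[of B, OF B_zero] by simp
qed

end

definition local_sq_deviation :: "(real \<Rightarrow> 'v::real_normed_vector) \<Rightarrow> real \<Rightarrow> ennreal" where
  "local_sq_deviation b r = (\<integral>\<^sup>+p. ennreal (indicator {r - 1..r} p * (norm (b r - b p))^2) \<partial>lborel)"

definition unit_sq_increment :: "(real \<Rightarrow> 'v::real_normed_vector) \<Rightarrow> real \<Rightarrow> ennreal" where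
  "unit_sq_increment b r = ennreal ((norm (b r - b (r - 1)))^2)"

definition lyapunov_forcing_bound ::
    "real \<Rightarrow> real \<Rightarrow> real \<Rightarrow> (real \<Rightarrow> 'v::real_normed_vector) \<Rightarrow> real \<Rightarrow> ennreal" where
  "lyapunov_forcing_bound k0 kH \<sigma> b r = ennreal k0 + ennreal (kH * \<sigma>^2 / 4) * unit_sq_increment b r
     + ennreal (2 * \<sigma>^2) * local_sq_deviation b r"

definition gap_forcing_bound ::
    "real \<Rightarrow> real \<Rightarrow> real \<Rightarrow> (real \<Rightarrow> 'v::real_normed_vector) \<Rightarrow> (real \<Rightarrow> 'v) \<Rightarrow> real \<Rightarrow> ennreal" where
  "gap_forcing_bound aL \<sigma> \<delta> b y r = ennreal (\<sigma>^2) * local_sq_deviation b r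
     + ennreal (\<sigma>^2 / 4) * unit_sq_increment b r + ennreal (aL^2)
         * ennreal ((norm (y (grid_floor \<delta> r)))^2)"

context langevin_path
begin

lemma noise_residual_sq_le:
  assumes r: "r \<ge> 0"
  shows "ennreal ((norm (noise_residual r))^2) \<le> ennreal (\<sigma>^2) * local_sq_deviation (extend0 B) r"
proof -
  have cont: "continuous_on {r - 1..r} (\<lambda>p. extend0 B r - extend0 B p)"
    by (intro continuous_intros continuous_on_subset[OF continuous_on_extend0[OF cont_B]]) auto
  have int: "(\<lambda>p. (norm (extend0 B r - extend0 B p))^2) integrable_on {r - 1..r}"
    by (intro integrable_continuous_interval continuous_intros cont)
  have "extend0 B r - moving_average B r = integral {r - 1..r} (\<lambda>p. extend0 B r - extend0 B p)"
    unfolding moving_average_def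
    by (subst integral_diff) (auto intro!: integrable_continuous_interval
        continuous_on_subset[OF continuous_on_extend0[OF cont_B]])
  then have "(norm (noise_residual r))^2
      \<le> \<sigma>^2 * integral {r - 1..r} (\<lambda>p. (norm (extend0 B r - extend0 B p))^2)"
    using norm_integral_square_le[OF cont] unfolding noise_residual_def
    by (simp add: power_mult_distrib mult_left_mono)
  moreover have "0 \<le> integral {r - 1..r} (\<lambda>p. (norm (extend0 B r - extend0 B p))^2)"
    by (rule integral_nonneg[OF int]) simp
  ultimately show ?thesis
    unfolding local_sq_deviation_def nn_integral_indicator_eq_integral[OF int zero_le_power2]
    by (simp add: ennreal_mult[symmetric] ennreal_leI)
qed

lemma noise_increment_sq:
  "(norm (noise_increment r))^2 = (\<sigma>^2 / 4) * (norm (extend0 B r - extend0 B (r - 1)))^2"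
  unfolding noise_increment_def by (simp add: power_mult_distrib power_divide)

lemma lyapunov_forcing_le_bound:
  assumes r: "r \<ge> 0"
  shows "ennreal (lyapunov_forcing r)
      \<le> lyapunov_forcing_bound (a * (L + m) * R^2) (8 / (a * m) + 1) \<sigma> (extend0 B) r"
proof -
  define k0 where "k0 = a * (L + m) * R^2"
  define kH where "kH = (8 / (a * m) + 1) * \<sigma>^2 / 4"
  have "k0 \<ge> 0" "kH \<ge> 0" unfolding k0_def kH_def using a_pos L_pos m_pos by simp_all
  have "lyapunov_forcing r = k0 + kH * (norm (extend0 B r - extend0 B (r - 1)))^2
      + 2 * (norm (noise_residual r))^2"
    unfolding lyapunov_forcing_def noise_increment_sq k0_def kH_def by (simp add: algebra_simps)
  then have "ennreal (lyapunov_forcing r) = ennreal k0 + ennreal kH * unit_sq_increment (extend0 B) r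
      + 2 * ennreal ((norm (noise_residual r))^2)"
    using \<open>k0 \<ge> 0\<close> \<open>kH \<ge> 0\<close> unfolding unit_sq_increment_def by (simp add: ennreal_plus ennreal_mult)
  also have "2 * ennreal ((norm (noise_residual r))^2) \<le>
      2 * (ennreal (\<sigma>^2) * local_sq_deviation (extend0 B) r)"
    by (intro mult_left_mono noise_residual_sq_le r) simp
  finally show ?thesis
    unfolding lyapunov_forcing_bound_def k0_def kH_def
        by (simp add: ennreal_mult mult.assoc add_left_mono)
qed

lemma gap_forcing_le_bound:
  assumes r: "r \<ge> 0"
  shows "ennreal (gap_forcing r) \<le> gap_forcing_bound (a * L) \<sigma> \<delta> (extend0 B) (extend0 X) r"
proof -
  have "extend0 X (grid_floor \<delta> r) = X (grid_floor \<delta> r)"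
    unfolding extend0_def using grid_floor_nonneg[OF \<delta>_pos r] by simp
  then have "ennreal (gap_forcing r) = ennreal ((norm (noise_residual r))^2)
      + ennreal (\<sigma>^2 / 4) * unit_sq_increment (extend0 B) r
      + ennreal ((a * L)^2) * ennreal ((norm (extend0 X (grid_floor \<delta> r)))^2)"
    unfolding gap_forcing_def noise_increment_sq unit_sq_increment_def
    by (simp add: ennreal_plus[symmetric] ennreal_mult[symmetric] del: ennreal_plus)
  also have "ennreal ((norm (noise_residual r))^2) \<le> ennreal (\<sigma>^2) * local_sq_deviation (extend0 B) r"
    by (rule noise_residual_sq_le[OF r])
  finally show ?thesis
    unfolding gap_forcing_bound_def by (simp add: add_right_mono)
qed

lemma position_sq_bound:
  assumes t: "0 \<le> t"
  shows "ennreal ((norm (X t))^2) \<le> ennreal (2 * (norm x0)^2) +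
    2 * (\<integral>\<^sup>+r. ennreal (indicator {0..t} r * exp (- (a * m / 8) * (t - r)))
          * lyapunov_forcing_bound (a * (L + m) * R^2) (8 / (a * m) + 1) \<sigma> (extend0 B) r \<partial>lborel)"
proof -
  define c where "c = a * m / 8"
  define I where "I = exp (- c * t) * integral {0..t} (\<lambda>r. exp (c * r) * lyapunov_forcing r)"
  have I_nonneg: "0 \<le> I"
    unfolding I_def
        by (intro mult_nonneg_nonneg integral_nonneg integrable_exp_lyapunov_forcing)
            (simp_all add: lyapunov_forcing_nonneg)
  have "exp (- c * t) \<le> 1" using t a_pos m_pos unfolding c_def by simp
  then have "exp (- c * t) * (norm x0)^2 \<le> (norm x0)^2"
    using mult_right_mono[of "exp (- c * t)" 1 "(norm x0)^2"] by simp
  then have "(norm (X t))^2 \<le> 2 * (norm x0)^2 + 2 * I"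
    using norm_add_square_le[of "smoothed_position t" "X t - smoothed_position t"]
        lyapunov_bound[OF t]
    unfolding I_def c_def by (simp add: algebra_simps)
  then have "ennreal ((norm (X t))^2) \<le> ennreal (2 * (norm x0)^2 + 2 * I)"
    by (rule ennreal_leI)
  also have "\<dots> = ennreal (2 * (norm x0)^2) + 2 * ennreal I"
    using I_nonneg by (simp add: ennreal_plus ennreal_mult)
  also have "ennreal I \<le> (\<integral>\<^sup>+r. ennreal (indicator {0..t} r * exp (- c * (t - r)))
      * lyapunov_forcing_bound (a * (L + m) * R^2) (8 / (a * m) + 1) \<sigma> (extend0 B) r \<partial>lborel)"
    unfolding I_def
    by (rule exp_convolution_le_nn_integral[OF t integrable_exp_lyapunov_forcing
        lyapunov_forcing_nonneg lyapunov_forcing_le_bound]) simp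
  finally show ?thesis unfolding c_def by (simp add: mult_left_mono)
qed

lemma velocity_sq_bound:
  assumes t: "0 \<le> t"
  shows "ennreal ((norm (U t))^2) \<le>
    8 * (\<integral>\<^sup>+r. ennreal (indicator {0..t} r * exp (- (t - r)))
          * gap_forcing_bound (a * L) \<sigma> \<delta> (extend0 B) (extend0 X) r \<partial>lborel)
    + ennreal (2 * \<sigma>^2) * local_sq_deviation (extend0 B) t"
proof -
  define I where "I = exp (- 1 * t) * integral {0..t} (\<lambda>r. exp (1 * r) * gap_forcing r)"
  have I_nonneg: "0 \<le> I"
    unfolding I_def
        by (intro mult_nonneg_nonneg integral_nonneg integrable_exp_gap_forcing t)
            (simp_all add: gap_forcing_nonneg)
  have "(norm (U t))^2 \<le> 8 * I + 2 * (norm (noise_residual t))^2"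
    using speed_sq_le[OF t] norm_x_minus_q_square_le[OF t] unfolding speed_sq_def I_def by simp
  then have "ennreal ((norm (U t))^2) \<le> ennreal (8 * I + 2 * (norm (noise_residual t))^2)"
    by (rule ennreal_leI)
  also have "\<dots> = 8 * ennreal I + 2 * ennreal ((norm (noise_residual t))^2)"
    using I_nonneg by (simp add: ennreal_plus ennreal_mult)
  also have "ennreal I \<le> (\<integral>\<^sup>+r. ennreal (indicator {0..t} r * exp (- 1 * (t - r)))
      * gap_forcing_bound (a * L) \<sigma> \<delta> (extend0 B) (extend0 X) r \<partial>lborel)"
    unfolding I_def
    by (rule exp_convolution_le_nn_integral[OF t integrable_exp_gap_forcing[OF t]
        gap_forcing_nonneg gap_forcing_le_bound]) simp
  also have "ennreal ((norm (noise_residual t))^2) \<le> ennreal (\<sigma>^2) * local_sq_deviation (extend0 B) t"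
    by (rule noise_residual_sq_le[OF t])
  finally show ?thesis by (simp add: ennreal_mult mult.assoc mult_left_mono add_mono)
qed

lemma gradient_lag_sq_bound:
  assumes t: "0 \<le> t"
  shows "ennreal ((norm (G (X t) - G (X (grid_floor \<delta> t))))^2) \<le>
    ennreal (L^2 * \<delta>)
        * (\<integral>\<^sup>+r. ennreal (indicator {grid_floor \<delta> t..t} r * (norm (extend0 U r))^2) \<partial>lborel)"
proof -
  define g where "g = grid_floor \<delta> t"
  have g: "0 \<le> g" "g \<le> t" using grid_floor_bounds[OF \<delta>_pos, of t] grid_floor_nonneg[OF \<delta>_pos t]
      unfolding g_def by auto
  have "(norm (G (X t) - G (X g)))^2 \<le> (L * norm (X t - X g))^2"
    using G_Lipschitz[of "X t" "X g"] by (intro power_mono) auto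
  also have "\<dots> \<le> L^2 * (\<delta> * integral {g..t} speed_sq)"
    using lag_square_le_integral[OF t] unfolding g_def power_mult_distrib
        by (intro mult_left_mono) auto
  finally have "ennreal ((norm (G (X t) - G (X g)))^2) \<le> ennreal (L^2 * \<delta> * integral {g..t} speed_sq)"
    by (intro ennreal_leI) (simp add: mult.assoc)
  also have "\<dots> = ennreal (L^2 * \<delta>) * ennreal (integral {g..t} speed_sq)"
    using \<delta>_pos g
        by (intro ennreal_mult integral_nonneg integrable_speed_sq) (simp_all add: speed_sq_nonneg)
  also have "ennreal (integral {g..t} speed_sq)
      = (\<integral>\<^sup>+r. ennreal (indicator {g..t} r * speed_sq r) \<partial>lborel)"
    using g by
        (intro nn_integral_indicator_eq_integral[symmetric] integrable_speed_sq speed_sq_nonneg)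
  also have "\<dots> = (\<integral>\<^sup>+r. ennreal (indicator {g..t} r * (norm (extend0 U r))^2) \<partial>lborel)"
    using g by (intro nn_integral_cong) (auto simp: indicator_def extend0_def speed_sq_def)
  finally show ?thesis unfolding g_def .
qed

end

section \<open>Expectations of the pathwise bounds\<close>

lemma nn_integral_exp_kernel_le:
  assumes c: "c > 0" and t: "t \<ge> 0"
  shows "(\<integral>\<^sup>+r. ennreal (indicator {0..t} r * exp (- c * (t - r))) \<partial>lborel) \<le> ennreal (1 / c)"
proof -
  have "((\<lambda>r. exp (- c * (t - r))) has_integral
      (exp (- c * (t - t)) / c - exp (- c * (t - 0)) / c)) {0..t}"
  proof (rule fundamental_theorem_of_calculus[OF t])
    fix r assume "r \<in> {0..t}"
    have "((\<lambda>r. exp (- c * (t - r)) / c) has_real_derivative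
        exp (- c * (t - r)) * (- c * (0 - 1)) / c)
        (at r within {0..t})"
      by (intro derivative_eq_intros) (use c in auto)
    then show "((\<lambda>r. exp (- c * (t - r)) / c) has_vector_derivative exp (- c * (t - r)))
        (at r within {0..t})"
      using c by (simp add: has_real_derivative_iff_has_vector_derivative)
  qed
  then have "(\<integral>\<^sup>+r. ennreal (indicator {0..t} r * exp (- c * (t - r))) \<partial>lborel)
      = ennreal (1 / c - exp (- c * t) / c)"
    by (subst nn_integral_has_integral_lebesgue[where I="1 / c - exp (- c * t) / c"]) auto
  also have "\<dots> \<le> ennreal (1 / c)" using c by (intro ennreal_leI) simp
  finally show ?thesis .
qed

locale mean_square_process = prob_space M for M :: "'a measure" +
  fixes b :: "real \<times> 'a \<Rightarrow> 'v::{real_normed_vector, second_countable_topology}" and d :: real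
  assumes measurable_b[measurable]: "b \<in> borel_measurable (lborel \<Otimes>\<^sub>M M)"
    and increment_sq_le:
      "\<And>r p. (\<integral>\<^sup>+\<omega>. ennreal ((norm (b (r, \<omega>) - b (p, \<omega>)))^2) \<partial>M) \<le> ennreal (d * \<bar>r - p\<bar>)"
    and d_nonneg: "d \<ge> 0"
begin

sublocale lborel_M: pair_sigma_finite lborel M
  unfolding pair_sigma_finite_def using sigma_finite_lborel sigma_finite_measure_axioms by simp

lemma measurable_slice: "F \<in> borel_measurable (lborel \<Otimes>\<^sub>M M) \<Longrightarrow> (\<lambda>\<omega>. F (r, \<omega>)) \<in> borel_measurable M"
  using measurable_compose[OF measurable_Pair1'[of r lborel M]] by simp

lemma measurable_local_sq_deviation[measurable]:
  "(\<lambda>p. local_sq_deviation (\<lambda>r. b (r, snd p)) (fst p)) \<in> borel_measurable (lborel \<Otimes>\<^sub>M M)"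
proof -
  have "(\<lambda>(p, q). ennreal (indicator {fst p - 1..fst p} q * (norm (b p - b (q, snd p)))^2))
        \<in> borel_measurable ((lborel \<Otimes>\<^sub>M M) \<Otimes>\<^sub>M lborel)"
    unfolding indicator_def atLeastAtMost_iff by measurable
  from lborel.borel_measurable_nn_integral_fst[OF this] show ?thesis
    unfolding local_sq_deviation_def by simp
qed

lemma measurable_unit_sq_increment[measurable]:
  "(\<lambda>p. unit_sq_increment (\<lambda>r. b (r, snd p)) (fst p)) \<in> borel_measurable (lborel \<Otimes>\<^sub>M M)"
  unfolding unit_sq_increment_def by measurable

lemma measurable_local_sq_deviation_at:
  "(\<lambda>\<omega>. local_sq_deviation (\<lambda>r. b (r, \<omega>)) t) \<in> borel_measurable M"
  using measurable_slice[OF measurable_local_sq_deviation, of t] by simp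

lemma measurable_unit_sq_increment_at:
  "(\<lambda>\<omega>. unit_sq_increment (\<lambda>r. b (r, \<omega>)) t) \<in> borel_measurable M"
  using measurable_slice[OF measurable_unit_sq_increment, of t] by simp

lemma expectation_local_sq_deviation_le:
  "(\<integral>\<^sup>+\<omega>. local_sq_deviation (\<lambda>r. b (r, \<omega>)) r \<partial>M) \<le> ennreal d"
proof -
  have "(\<integral>\<^sup>+\<omega>. local_sq_deviation (\<lambda>r. b (r, \<omega>)) r \<partial>M) =
      (\<integral>\<^sup>+p. (\<integral>\<^sup>+\<omega>. ennreal (indicator {r - 1..r} p * (norm (b (r, \<omega>) - b (p, \<omega>)))^2) \<partial>M) \<partial>lborel)"
    unfolding local_sq_deviation_def
    by (rule lborel_M.Fubini') (unfold indicator_def, measurable)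
  also have "\<dots> \<le> (\<integral>\<^sup>+p. ennreal (indicator {r - 1..r} p * d) \<partial>lborel)"
  proof (rule nn_integral_mono)
    fix p
    show "(\<integral>\<^sup>+\<omega>. ennreal (indicator {r - 1..r} p * (norm (b (r, \<omega>) - b (p, \<omega>)))^2) \<partial>M)
        \<le> ennreal (indicator {r - 1..r} p * d)"
    proof (cases "p \<in> {r - 1..r}")
      case True
      then have "ennreal (d * \<bar>r - p\<bar>) \<le> ennreal d"
        using d_nonneg by (intro ennreal_leI) (simp add: mult_left_le)
      then show ?thesis using True increment_sq_le[of r p] by simp
    qed simp
  qed
  also have "\<dots> = ennreal d"
    using d_nonneg
        by (simp add: ennreal_mult ennreal_indicator nn_integral_cmult_indicator mult.commute)
  finally show ?thesis .
qed

lemma expectation_unit_sq_increment_le: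
  "(\<integral>\<^sup>+\<omega>. unit_sq_increment (\<lambda>r. b (r, \<omega>)) r \<partial>M) \<le> ennreal d"
  unfolding unit_sq_increment_def using increment_sq_le[of r "r - 1"] by simp

lemma expectation_kernel_integral_le:
  assumes F[measurable]: "F \<in> borel_measurable (lborel \<Otimes>\<^sub>M M)"
    and k[measurable]: "k \<in> borel_measurable borel"
    and F_le: "\<And>r. (\<integral>\<^sup>+\<omega>. F (r, \<omega>) \<partial>M) \<le> ennreal C"
  shows "(\<integral>\<^sup>+\<omega>. (\<integral>\<^sup>+r. ennreal (k r) * F (r, \<omega>) \<partial>lborel) \<partial>M) \<le> ennreal C * (\<integral>\<^sup>+r. ennreal (k r) \<partial>lborel)"
proof -
  have "(\<integral>\<^sup>+\<omega>. (\<integral>\<^sup>+r. ennreal (k r) * F (r, \<omega>) \<partial>lborel) \<partial>M) =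
        (\<integral>\<^sup>+r. (\<integral>\<^sup>+\<omega>. ennreal (k r) * F (r, \<omega>) \<partial>M) \<partial>lborel)"
  proof -
    have "(\<lambda>p. ennreal (k (fst p)) * F p) \<in> borel_measurable (lborel \<Otimes>\<^sub>M M)" by measurable
    from lborel_M.Fubini[OF this] show ?thesis by simp
  qed
  also have "\<dots> = (\<integral>\<^sup>+r. ennreal (k r) * (\<integral>\<^sup>+\<omega>. F (r, \<omega>) \<partial>M) \<partial>lborel)"
    by (intro nn_integral_cong nn_integral_cmult) measurable
  also have "\<dots> \<le> (\<integral>\<^sup>+r. ennreal (k r) * ennreal C \<partial>lborel)"
    by (intro nn_integral_mono mult_left_mono F_le) auto
  also have "\<dots> = ennreal C * (\<integral>\<^sup>+r. ennreal (k r) \<partial>lborel)"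
    by (subst nn_integral_cmult[symmetric]) (simp_all add: mult.commute)
  finally show ?thesis .
qed

lemma expectation_exp_convolution_le:
  assumes F[measurable]: "F \<in> borel_measurable (lborel \<Otimes>\<^sub>M M)"
    and F_le: "\<And>r. (\<integral>\<^sup>+\<omega>. F (r, \<omega>) \<partial>M) \<le> ennreal C"
    and C: "C \<ge> 0" and c: "c > 0" and t: "t \<ge> 0"
  shows "(\<integral>\<^sup>+\<omega>. (\<integral>\<^sup>+r. ennreal (indicator {0..t} r * exp (- c * (t - r))) * F (r, \<omega>) \<partial>lborel) \<partial>M)
    \<le> ennreal (C / c)"
proof -
  have "(\<lambda>r. indicator {0..t} r * exp (- c * (t - r))) \<in> borel_measurable borel"
    unfolding indicator_def by measurable
  from expectation_kernel_integral_le[OF F this F_le]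
  have "(\<integral>\<^sup>+\<omega>. (\<integral>\<^sup>+r. ennreal (indicator {0..t} r * exp (- c * (t - r))) * F (r, \<omega>) \<partial>lborel) \<partial>M)
      \<le> ennreal C * (\<integral>\<^sup>+r. ennreal (indicator {0..t} r * exp (- c * (t - r))) \<partial>lborel)" .
  also have "\<dots> \<le> ennreal C * ennreal (1 / c)"
    by (intro mult_left_mono nn_integral_exp_kernel_le c t) simp
  finally show ?thesis using C c by (simp add: ennreal_mult[symmetric])
qed

lemma measurable_lyapunov_forcing_bound[measurable]:
  "(\<lambda>p. lyapunov_forcing_bound k0 kH \<sigma> (\<lambda>r. b (r, snd p)) (fst p)) \<in> borel_measurable (lborel \<Otimes>\<^sub>M M)"
  unfolding lyapunov_forcing_bound_def by measurable

lemma expectation_lyapunov_forcing_bound_le: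
  assumes "k0 \<ge> 0" and "kH \<ge> 0"
  shows "(\<integral>\<^sup>+\<omega>. lyapunov_forcing_bound k0 kH \<sigma> (\<lambda>r. b (r, \<omega>)) r \<partial>M)
    \<le> ennreal (k0 + kH * \<sigma>^2 / 4 * d + 2 * \<sigma>^2 * d)"
proof -
  have "(\<integral>\<^sup>+\<omega>. lyapunov_forcing_bound k0 kH \<sigma> (\<lambda>r. b (r, \<omega>)) r \<partial>M) =
      ennreal k0 + ennreal (kH * \<sigma>^2 / 4) * (\<integral>\<^sup>+\<omega>. unit_sq_increment (\<lambda>r. b (r, \<omega>)) r \<partial>M)
      + ennreal (2 * \<sigma>^2) * (\<integral>\<^sup>+\<omega>. local_sq_deviation (\<lambda>r. b (r, \<omega>)) r \<partial>M)"
    unfolding lyapunov_forcing_bound_def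
    using measurable_local_sq_deviation_at measurable_unit_sq_increment_at
    by (simp add: nn_integral_add nn_integral_cmult emeasure_space_1)
  also have "\<dots> \<le> ennreal k0 + ennreal (kH * \<sigma>^2 / 4) * ennreal d + ennreal (2 * \<sigma>^2) * ennreal d"
    by (intro add_mono mult_left_mono expectation_local_sq_deviation_le
        expectation_unit_sq_increment_le) auto
  also have "\<dots> = ennreal (k0 + kH * \<sigma>^2 / 4 * d + 2 * \<sigma>^2 * d)"
    using assms d_nonneg
        by (simp add: ennreal_mult[symmetric] ennreal_plus[symmetric] del: ennreal_plus)
  finally show ?thesis .
qed

lemma measurable_gap_forcing_bound[measurable]:
  assumes [measurable]: "y \<in> borel_measurable (lborel \<Otimes>\<^sub>M M)"
  shows "(\<lambda>p. gap_forcing_bound aL \<sigma> \<delta> (\<lambda>r. b (r, snd p)) (\<lambda>r. y (r, snd p)) (fst p))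
    \<in> borel_measurable (lborel \<Otimes>\<^sub>M M)"
  unfolding gap_forcing_bound_def grid_floor_def by measurable

lemma expectation_gap_forcing_bound_le:
  assumes [measurable]: "y \<in> borel_measurable (lborel \<Otimes>\<^sub>M M)"
    and y_le: "\<And>s. (\<integral>\<^sup>+\<omega>. ennreal ((norm (y (s, \<omega>)))^2) \<partial>M) \<le> ennreal C"
    and C: "C \<ge> 0"
  shows "(\<integral>\<^sup>+\<omega>. gap_forcing_bound aL \<sigma> \<delta> (\<lambda>r. b (r, \<omega>)) (\<lambda>r. y (r, \<omega>)) r \<partial>M)
    \<le> ennreal (\<sigma>^2 * d + \<sigma>^2 / 4 * d + aL^2 * C)"
proof -
  have "(\<integral>\<^sup>+\<omega>. gap_forcing_bound aL \<sigma> \<delta> (\<lambda>r. b (r, \<omega>)) (\<lambda>r. y (r, \<omega>)) r \<partial>M) =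
      ennreal (\<sigma>^2) * (\<integral>\<^sup>+\<omega>. local_sq_deviation (\<lambda>r. b (r, \<omega>)) r \<partial>M)
      + ennreal (\<sigma>^2 / 4) * (\<integral>\<^sup>+\<omega>. unit_sq_increment (\<lambda>r. b (r, \<omega>)) r \<partial>M)
      + ennreal (aL^2) * (\<integral>\<^sup>+\<omega>. ennreal ((norm (y (grid_floor \<delta> r, \<omega>)))^2) \<partial>M)"
    unfolding gap_forcing_bound_def
    using measurable_local_sq_deviation_at measurable_unit_sq_increment_at
      measurable_slice[of "\<lambda>p. ennreal ((norm (y p))^2)" "grid_floor \<delta> r"]
    by (simp add: nn_integral_add nn_integral_cmult)
  also have "\<dots> \<le>
      ennreal (\<sigma>^2) * ennreal d + ennreal (\<sigma>^2 / 4) * ennreal d + ennreal (aL^2) * ennreal C"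
    by (intro add_mono mult_left_mono expectation_local_sq_deviation_le
        expectation_unit_sq_increment_le
        y_le) auto
  also have "\<dots> = ennreal (\<sigma>^2 * d + \<sigma>^2 / 4 * d + aL^2 * C)"
    using C d_nonneg by (simp add: ennreal_mult[symmetric] ennreal_plus[symmetric] del: ennreal_plus)
  finally show ?thesis .
qed

lemma measurable_exp_convolution:
  assumes [measurable]: "F \<in> borel_measurable (lborel \<Otimes>\<^sub>M M)"
  shows "(\<lambda>\<omega>. \<integral>\<^sup>+r. ennreal (indicator {0..t} r * exp (- c * (t - r))) * F (r, \<omega>) \<partial>lborel)
      \<in> borel_measurable M"
proof -
  have "(\<lambda>(\<omega>, r). ennreal (indicator {0..t} r * exp (- c * (t - r))) * F (r, \<omega>))
      \<in> borel_measurable (M \<Otimes>\<^sub>M lborel)"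
    unfolding indicator_def by measurable
  from lborel.borel_measurable_nn_integral[OF this] show ?thesis by simp
qed

lemma expectation_le_exp_convolution_bound:
  assumes f_le: "AE \<omega> in M. f \<omega> \<le> A \<omega> +
      K * (\<integral>\<^sup>+r. ennreal (indicator {0..t} r * exp (- c * (t - r))) * F r \<omega> \<partial>lborel)"
    and F: "(\<lambda>p. F (fst p) (snd p)) \<in> borel_measurable (lborel \<Otimes>\<^sub>M M)"
    and F_le: "\<And>r. (\<integral>\<^sup>+\<omega>. F r \<omega> \<partial>M) \<le> ennreal C"
    and "C \<ge> 0" "c > 0" "t \<ge> 0" and A[measurable]: "A \<in> borel_measurable M"
  shows "(\<integral>\<^sup>+\<omega>. f \<omega> \<partial>M) \<le> (\<integral>\<^sup>+\<omega>. A \<omega> \<partial>M) + K * ennreal (C / c)"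
proof -
  have "(\<integral>\<^sup>+\<omega>. f \<omega> \<partial>M) \<le> (\<integral>\<^sup>+\<omega>. A \<omega> +
      K * (\<integral>\<^sup>+r. ennreal (indicator {0..t} r * exp (- c * (t - r))) * F r \<omega> \<partial>lborel) \<partial>M)"
    using f_le by (rule nn_integral_mono_AE)
  also have "\<dots> = (\<integral>\<^sup>+\<omega>. A \<omega> \<partial>M) +
      K * (\<integral>\<^sup>+\<omega>. (\<integral>\<^sup>+r. ennreal (indicator {0..t} r * exp (- c * (t - r))) * F r \<omega> \<partial>lborel) \<partial>M)"
    using measurable_exp_convolution[OF F, of t c] by (simp add: nn_integral_add nn_integral_cmult)
  also have "\<dots> \<le> (\<integral>\<^sup>+\<omega>. A \<omega> \<partial>M) + K * ennreal (C / c)"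
    using expectation_exp_convolution_le[OF F, of C c t] assms
        by (intro add_left_mono mult_left_mono) auto
  finally show ?thesis .
qed

end

section \<open>Brownian increments and jointly measurable versions\<close>

lemma brownian_increment_sq_moment:
  fixes B :: "real \<Rightarrow> 'a \<Rightarrow> real^'d"
  assumes BM: "brownian_motion M B" and st: "0 \<le> s" "s < t"
  shows "(\<integral>\<^sup>+\<omega>. ennreal ((norm (B t \<omega> - B s \<omega>))^2) \<partial>M) = ennreal (real CARD('d) * (t - s))"
proof -
  have D: "distributed M lborel (\<lambda>\<omega>. (B t \<omega> - B s \<omega>) $ i) (normal_density 0 (sqrt (t - s)))" for i
    using BM st unfolding brownian_motion_def by auto
  have sd: "sqrt (t - s) > 0" using st by simp
  have coordinate: "(\<integral>\<^sup>+\<omega>. ennreal (((B t \<omega> - B s \<omega>) $ i)^2) \<partial>M) = ennreal (t - s)" for i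
  proof -
    have "(\<integral>\<^sup>+\<omega>. ennreal (((B t \<omega> - B s \<omega>) $ i)^2) \<partial>M) =
          (\<integral>\<^sup>+y. ennreal (normal_density 0 (sqrt (t - s)) y) * ennreal (y^2) \<partial>lborel)"
      by (rule distributed_nn_integral[OF D, symmetric]) simp
    also have "\<dots> = (\<integral>\<^sup>+y. ennreal (normal_density 0 (sqrt (t - s)) y * (y - 0)^(2 * 1)) \<partial>lborel)"
      by (simp add: ennreal_mult)
    also have "\<dots> = ennreal (\<integral>y. normal_density 0 (sqrt (t - s)) y * (y - 0)^(2 * 1) \<partial>lborel)"
      by (rule nn_integral_eq_integral[OF integrable_normal_moment[OF sd]]) simp
    also have "\<dots> = ennreal (t - s)"
      using integral_normal_moment_even[OF sd, of 0 1] st by (simp add: power2_eq_square)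
    finally show ?thesis .
  qed
  have "(\<lambda>\<omega>. (B t \<omega> - B s \<omega>) $ i) \<in> borel_measurable M" for i
    using D[of i] by (simp add: distributed_def)
  then have "(\<lambda>\<omega>. ((B t \<omega> - B s \<omega>) $ i)^2) \<in> borel_measurable M" for i
    by (rule borel_measurable_power)
  moreover have "(norm v)^2 = (\<Sum>i\<in>UNIV. (v $ i)^2)" for v :: "real^'d"
    unfolding power2_norm_eq_inner inner_vec_def by (simp add: power2_eq_square)
  ultimately have "(\<integral>\<^sup>+\<omega>. ennreal ((norm (B t \<omega> - B s \<omega>))^2) \<partial>M) =
      (\<Sum>i\<in>UNIV. (\<integral>\<^sup>+\<omega>. ennreal (((B t \<omega> - B s \<omega>) $ i)^2) \<partial>M))"
    by (simp add: nn_integral_sum sum_ennreal[symmetric] del: sum_ennreal)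
  also have "\<dots> = (\<Sum>i\<in>(UNIV::'d set). ennreal (t - s))"
    by (intro sum.cong refl coordinate)
  also have "\<dots> = ennreal (real CARD('d) * (t - s))"
    using st by (simp add: ennreal_mult ennreal_of_nat_eq_real_of_nat)
  finally show ?thesis .
qed

lemma brownian_increment_sq_moment_le:
  fixes B :: "real \<Rightarrow> 'a \<Rightarrow> real^'d"
  assumes BM: "brownian_motion M B" and "0 \<le> s" "0 \<le> t"
  shows "(\<integral>\<^sup>+\<omega>. ennreal ((norm (B t \<omega> - B s \<omega>))^2) \<partial>M) \<le> ennreal (real CARD('d) * \<bar>t - s\<bar>)"
proof -
  consider "s < t" | "s = t" | "t < s" by linarith
  then show ?thesis
  proof cases
    case 3
    then show ?thesis
      using brownian_increment_sq_moment[OF BM \<open>0 \<le> t\<close> 3] by (simp add: norm_minus_commute)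
  qed (use brownian_increment_sq_moment[OF BM \<open>0 \<le> s\<close>] in auto)
qed

lemma LIMSEQ_ceiling_div: "(\<lambda>n. real_of_int \<lceil>real (Suc n) * r\<rceil> / real (Suc n)) \<longlonglongrightarrow> r"
proof (rule tendsto_sandwich[where f="\<lambda>n. r" and h="\<lambda>n. r + 1 / real (Suc n)"])
  have "r \<le> real_of_int \<lceil>real (Suc n) * r\<rceil> / real (Suc n)"
    and "real_of_int \<lceil>real (Suc n) * r\<rceil> / real (Suc n) \<le> r + 1 / real (Suc n)" for n
    using le_of_int_ceiling[of "real (Suc n) * r"] of_int_ceiling_le_add_one[of "real (Suc n) * r"]
    by (simp_all add: field_simps del: of_nat_Suc)
  then show "\<forall>\<^sub>F n in sequentially. r \<le> real_of_int \<lceil>real (Suc n) * r\<rceil> / real (Suc n)"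
    and "\<forall>\<^sub>F n in sequentially. real_of_int \<lceil>real (Suc n) * r\<rceil> / real (Suc n) \<le> r + 1 / real (Suc n)"
    by simp_all
  show "(\<lambda>n. r + 1 / real (Suc n)) \<longlonglongrightarrow> r"
    using tendsto_add[OF tendsto_const LIMSEQ_Suc[OF lim_const_over_n], of r 1] by simp
qed simp

lemma borel_measurable_continuous_version:
  fixes f :: "real \<Rightarrow> 'a \<Rightarrow> 'b::real_normed_vector" and M :: "'a measure"
  assumes f: "\<And>t. t \<ge> 0 \<Longrightarrow> f t \<in> borel_measurable M" and N: "N \<in> sets M"
    and cont: "\<And>\<omega>. \<omega> \<in> space M - N \<Longrightarrow> continuous_on {0..} (\<lambda>t. f t \<omega>)"
  shows "(\<lambda>p. if snd p \<in> N then 0 else f (max 0 (fst p)) (snd p)) \<in> borel_measurable (lborel \<Otimes>\<^sub>M M)"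
proof (rule borel_measurable_LIMSEQ_metric)
  \<comment> \<open>approximate time from above by a countable grid, on which joint measurability is automatic\<close>
  define ceil_time where "ceil_time n r
      = max 0 (real_of_int \<lceil>real (Suc n) * r\<rceil> / real (Suc n))" for n r
  define fn where "fn n p = (if snd p \<in> N then 0 else f (ceil_time n (fst p)) (snd p))" for n p
  show "fn n \<in> borel_measurable (lborel \<Otimes>\<^sub>M M)" for n
  proof -
    have cell: "(\<lambda>p. if snd p \<in> N then 0 else f (max 0 (real_of_int i / real (Suc n))) (snd p))
        \<in> borel_measurable (lborel \<Otimes>\<^sub>M M)" for i :: int
    proof -
      have "(\<lambda>\<omega>. if \<omega> \<in> N then 0 else f (max 0 (real_of_int i / real (Suc n))) \<omega>)
          \<in> borel_measurable M"
        using N f by (intro measurable_If_set) auto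
      from measurable_compose[OF measurable_snd this, of lborel] show ?thesis by simp
    qed
    have "(\<lambda>p. \<lceil>real (Suc n) * fst p\<rceil>) \<in> lborel \<Otimes>\<^sub>M M \<rightarrow>\<^sub>M count_space UNIV"
      by measurable
    from measurable_compose_countable'[OF cell this] show ?thesis
      unfolding fn_def ceil_time_def by simp
  qed
  fix p :: "real \<times> 'a" assume p: "p \<in> space (lborel \<Otimes>\<^sub>M M)"
  show "(\<lambda>n. fn n p) \<longlonglongrightarrow> (if snd p \<in> N then 0 else f (max 0 (fst p)) (snd p))"
  proof (cases "snd p \<in> N")
    case False
    then have "continuous_on {0..} (\<lambda>t. f t (snd p))"
      using p by (intro cont) (auto simp: space_pair_measure)
    moreover have "(\<lambda>n. ceil_time n (fst p)) \<longlonglongrightarrow> max 0 (fst p)"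
      unfolding ceil_time_def by (intro tendsto_max tendsto_const LIMSEQ_ceiling_div)
    ultimately show ?thesis
      using False unfolding fn_def by (auto intro: continuous_on_tendsto_compose simp: ceil_time_def)
  qed (simp add: fn_def)
qed

section \<open>The discretized underdamped Langevin diffusion\<close>

lemma dissipativity_const_le_Lipschitz_const:
  fixes G :: "'v::euclidean_space \<Rightarrow> 'v"
  assumes Lip: "\<And>y z. norm (G y - G z) \<le> L * norm (y - z)" and G0: "G 0 = 0"
    and diss: "\<And>y z. norm (y - z) > R \<Longrightarrow> (G y - G z) \<bullet> (y - z) \<ge> m * (norm (y - z))^2"
  shows "m \<le> L"
proof -
  obtain b :: 'v where b: "b \<in> Basis" using nonempty_Basis by blast
  define y where "y = (\<bar>R\<bar> + 1) *\<^sub>R b"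
  have ny: "norm y = \<bar>R\<bar> + 1" using b by (simp add: y_def)
  have "m * (norm y)^2 \<le> G y \<bullet> y" using diss[of y 0] ny G0 by simp
  also have "\<dots> \<le> norm (G y) * norm y" by (rule norm_cauchy_schwarz)
  also have "\<dots> \<le> L * norm y * norm y" using Lip[of y 0] G0 by (intro mult_right_mono) auto
  finally have "m * (norm y)^2 \<le> L * (norm y)^2" by (simp add: power2_eq_square)
  moreover have "0 < (norm y)^2" using ny by (simp add: abs_add_one_gt_zero)
  ultimately show ?thesis by (rule mult_right_le_imp_le)
qed

lemma dissipative_inner_lower:
  fixes G :: "'v::euclidean_space \<Rightarrow> 'v"
  assumes Lip: "\<And>y z. norm (G y - G z) \<le> L * norm (y - z)" and G0: "G 0 = 0"
    and diss: "\<And>y z. norm (y - z) > R \<Longrightarrow> (G y - G z) \<bullet> (y - z) \<ge> m * (norm (y - z))^2"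
    and "0 \<le> L" "0 \<le> m"
  shows "y \<bullet> G y \<ge> m * (norm y)^2 - (L + m) * R^2"
proof (cases "norm y > R")
  case True
  then have "m * (norm y)^2 \<le> y \<bullet> G y" using diss[of y 0] G0 by (simp add: inner_commute)
  then show ?thesis using assms(4,5) by (smt (verit) zero_le_power2 mult_nonneg_nonneg)
next
  case False
  have "- (y \<bullet> G y) \<le> norm y * norm (G y)" using norm_cauchy_schwarz[of "- y" "G y"] by simp
  also have "\<dots> \<le> norm y * (L * norm y)" using Lip[of y 0] G0 by (intro mult_left_mono) auto
  also have "\<dots> = L * (norm y)^2" by (simp add: power2_eq_square)
  also have "\<dots> \<le> L * R^2"
    using False \<open>0 \<le> L\<close> by (intro mult_left_mono power_mono) auto
  finally have "- (L * R^2) \<le> y \<bullet> G y" by simp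
  moreover have "m * (norm y)^2 \<le> m * R^2"
    using False \<open>0 \<le> m\<close> by (intro mult_left_mono power_mono) auto
  ultimately show ?thesis by (simp add: algebra_simps)
qed

lemma (in langevin_drift) moment_constant_le:
  assumes \<sigma>: "\<sigma>^2 = 4 * a" and d: "0 \<le> d" and X0: "0 \<le> X0" "X0 \<le> R^2"
  shows "8 * (\<sigma>^2 * d + \<sigma>^2 / 4 * d + (a * L)^2 * (2 * X0 + 2 * (a * (L + m) * R^2
      + (8 / (a * m) + 1) * \<sigma>^2 / 4 * d + 2 * \<sigma>^2 * d) / (a * m / 8))) + 2 * \<sigma>^2 * d
    \<le> 10^9 * (R^2 + d / m)"
proof -
  define C1 where "C1 = a * (L + m) * R^2 + (8 / (a * m) + 1) * \<sigma>^2 / 4 * d + 2 * \<sigma>^2 * d"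
  have "C1 = a * (L + m) * R^2 + 8 * (d / m) + 9 * (a * d)"
    unfolding C1_def \<sigma> using a_pos m_pos by (simp add: field_simps)
  moreover have "a * (L + m) * R^2 \<le> (2 / 1000) * R^2"
    using a_L_le a_m_le by (intro mult_right_mono) (auto simp: algebra_simps)
  moreover have "a * d \<le> (1 / 1000) * (d / m)"
  proof -
    have "a * d = (a * m) * (d / m)" using m_pos by simp
    also have "\<dots> \<le> (1 / 1000) * (d / m)" using a_m_le d m_pos by (intro mult_right_mono) auto
    finally show ?thesis .
  qed
  moreover have "0 \<le> d / m" "0 \<le> a * d" "0 \<le> a * (L + m) * R^2"
    using d m_pos a_pos L_pos by simp_all
  ultimately have C1: "C1 \<le> (2 / 1000) * R^2 + 9 * (d / m)" "0 \<le> C1"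
    by linarith+
  have "(a * L)^2 * (2 * C1 / (a * m / 8)) = 16 * C1 / 1000"
    using a_L_sq a_pos m_pos by (simp add: power2_eq_square field_simps)
  moreover have "(a * L)^2 * (2 * X0) \<le> 1 * (2 * R^2)"
    using X0 a_L_le a_pos L_pos by (intro mult_mono) (auto simp: power_le_one)
  moreover have "\<sigma>^2 * d \<le> (4 / 1000) * (d / m)" "\<sigma>^2 / 4 * d = \<sigma>^2 * d / 4"
    "2 * \<sigma>^2 * d = 2 * (\<sigma>^2 * d)"
    using \<open>a * d \<le> (1 / 1000) * (d / m)\<close> unfolding \<sigma> by simp_all
  moreover have ten9: "(10::real)^9 = 1000000000" by simp
  ultimately show ?thesis
    unfolding C1_def[symmetric] ten9 unfolding distrib_left
    using C1 \<open>0 \<le> d / m\<close> zero_le_power2[of R] by linarith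
qed

locale langevin_solution =
  fixes G :: "real^'d \<Rightarrow> real^'d" and L m R \<delta> :: real and x0 :: "real^'d"
    and M :: "'a measure" and B x u :: "real \<Rightarrow> 'a \<Rightarrow> real^'d"
  assumes Lpos: "L > 0"
    and Lip: "\<forall>y z. norm (G y - G z) \<le> L * norm (y - z)"
    and G0: "G 0 = 0"
    and mpos: "m > 0"
    and dissip: "\<forall>y z. norm (y - z) > R \<longrightarrow> (G y - G z) \<bullet> (y - z) \<ge> m * (norm (y - z))^2"
    and delta_pos: "\<delta> > 0"
    and delta_le: "\<delta> \<le> 1 / (12000 * (L / m))"
    and x0: "norm x0 \<le> R"
    and BM: "brownian_motion M B"
    and xmeas: "\<forall>s\<ge>0. x s \<in> borel_measurable M"
    and umeas: "\<forall>s\<ge>0. u s \<in> borel_measurable M"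
    and sol: "AE \<omega> in M.
        continuous_on {0..} (\<lambda>s. x s \<omega>) \<and> continuous_on {0..} (\<lambda>s. u s \<omega>) \<and>
        (\<forall>s\<ge>0. x s \<omega> = x0 + integral {0..s} (\<lambda>r. u r \<omega>) \<and>
                u s \<omega> = integral {0..s} (\<lambda>r. (-2) *\<^sub>R u r \<omega>
                            - (1 / (1000 * (L / m) * L)) *\<^sub>R G (x (of_int \<lfloor>r / \<delta>\<rfloor> * \<delta>) \<omega>))
                         + sqrt (4 / (1000 * (L / m) * L)) *\<^sub>R B s \<omega>)"
begin

definition a :: real where "a = 1 / (1000 * (L / m) * L)"

definition \<sigma> :: real where "\<sigma> = sqrt (4 / (1000 * (L / m) * L))"

definition d :: real where "d = real CARD('d)"

lemma m_le_L: "m \<le> L"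
  using Lip G0 dissip by (intro dissipativity_const_le_Lipschitz_const[of G L R m]) auto

sublocale langevin_drift G L m R a \<delta>
proof
  show "a > 0" "a * L^2 = m / 1000"
    unfolding a_def using Lpos mpos by (simp_all add: power2_eq_square field_simps)
  have "1 / (12000 * (L / m)) \<le> 1 / 12000" using m_le_L mpos Lpos by (simp add: field_simps)
  then show "\<delta> \<le> 1 / 12000" using delta_le by simp
  show "m * (norm y)^2 - (L + m) * R^2 \<le> y \<bullet> G y" for y
    using Lip G0 dissip Lpos mpos by (intro dissipative_inner_lower[of G L R m]) auto
qed (use Lpos mpos m_le_L delta_pos G0 Lip in auto)

lemma \<sigma>_sq: "\<sigma>^2 = 4 * a"
  unfolding \<sigma>_def a_def using Lpos mpos by simp

sublocale prob_space M
  using BM unfolding brownian_motion_def by blast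

definition good_path :: "'a \<Rightarrow> bool" where
  "good_path \<omega> \<longleftrightarrow> B 0 \<omega> = 0 \<and> continuous_on {0..} (\<lambda>t. B t \<omega>) \<and>
     continuous_on {0..} (\<lambda>s. x s \<omega>) \<and> continuous_on {0..} (\<lambda>s. u s \<omega>) \<and>
     (\<forall>s\<ge>0. x s \<omega> = x0 + integral {0..s} (\<lambda>r. u r \<omega>) \<and>
        u s \<omega> = integral {0..s} (\<lambda>r. (-2) *\<^sub>R u r \<omega> - a *\<^sub>R G (x (grid_floor \<delta> r) \<omega>)) + \<sigma> *\<^sub>R B s \<omega>)"

lemma AE_good_path: "AE \<omega> in M. good_path \<omega>"
proof -
  have "AE \<omega> in M. B 0 \<omega> = 0 \<and> continuous_on {0..} (\<lambda>t. B t \<omega>)"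
    using BM unfolding brownian_motion_def by blast
  with sol show ?thesis
    unfolding good_path_def a_def \<sigma>_def grid_floor_def by (auto elim: AE_mp)
qed

definition bad_set :: "'a set" where
  "bad_set = (SOME N. N \<in> null_sets M \<and> {\<omega> \<in> space M. \<not> good_path \<omega>} \<subseteq> N)"

lemma bad_set: "bad_set \<in> null_sets M" "\<And>\<omega>. \<omega> \<in> space M - bad_set \<Longrightarrow> good_path \<omega>"
proof -
  have "\<exists>N. N \<in> null_sets M \<and> {\<omega> \<in> space M. \<not> good_path \<omega>} \<subseteq> N"
    using AE_good_path by (auto elim!: AE_E)
  then have "bad_set \<in> null_sets M \<and> {\<omega> \<in> space M. \<not> good_path \<omega>} \<subseteq> bad_set"
    unfolding bad_set_def by (rule someI_ex)
  then show "bad_set \<in> null_sets M" "\<And>\<omega>. \<omega> \<in> space M - bad_set \<Longrightarrow> good_path \<omega>" by auto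
qed

lemma AE_not_bad: "AE \<omega> in M. \<omega> \<notin> bad_set"
  by (rule AE_not_in[OF bad_set(1)])

lemma langevin_path_if_good:
  assumes "good_path \<omega>"
  shows "langevin_path G L m R a \<delta> \<sigma> x0 (\<lambda>s. B s \<omega>) (\<lambda>s. x s \<omega>) (\<lambda>s. u s \<omega>)"
  using assms unfolding good_path_def by unfold_locales auto

text \<open>Unlike the processes themselves, which are only measurable at each fixed time, these versions
  are jointly measurable in time and sample point, as needed for Tonelli's theorem.\<close>

definition version :: "(real \<Rightarrow> 'a \<Rightarrow> real^'d) \<Rightarrow> real \<times> 'a \<Rightarrow> real^'d" where
  "version f p = (if snd p \<in> bad_set then 0 else f (max 0 (fst p)) (snd p))"

lemma version_eq: "\<omega> \<notin> bad_set \<Longrightarrow> (\<lambda>r. version f (r, \<omega>)) = extend0 (\<lambda>s. f s \<omega>)"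
  unfolding version_def extend0_def by auto

lemma measurable_version:
  assumes "\<And>s. s \<ge> 0 \<Longrightarrow> f s \<in> borel_measurable M"
    and "\<And>\<omega>. good_path \<omega> \<Longrightarrow> continuous_on {0..} (\<lambda>s. f s \<omega>)"
  shows "version f \<in> borel_measurable (lborel \<Otimes>\<^sub>M M)"
  unfolding version_def[abs_def]
  using assms bad_set by (intro borel_measurable_continuous_version) auto

lemma measurable_versions:
  "version B \<in> borel_measurable (lborel \<Otimes>\<^sub>M M)"
  "version x \<in> borel_measurable (lborel \<Otimes>\<^sub>M M)"
  "version u \<in> borel_measurable (lborel \<Otimes>\<^sub>M M)"
  using BM xmeas umeas by (auto intro!: measurable_version simp: good_path_def brownian_motion_def)

sublocale noise: mean_square_process M "version B" d
proof
  show "version B \<in> borel_measurable (lborel \<Otimes>\<^sub>M M)" by (fact measurable_versions)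
  show "d \<ge> 0" unfolding d_def by simp
  fix r p
  have "(\<integral>\<^sup>+\<omega>. ennreal ((norm (version B (r, \<omega>) - version B (p, \<omega>)))^2) \<partial>M) =
        (\<integral>\<^sup>+\<omega>. ennreal ((norm (B (max 0 r) \<omega> - B (max 0 p) \<omega>))^2) \<partial>M)"
    by (rule nn_integral_cong_AE) (use AE_not_bad in \<open>auto simp: version_def elim: eventually_mono\<close>)
  also have "\<dots> \<le> ennreal (d * \<bar>max 0 r - max 0 p\<bar>)"
    unfolding d_def by (rule brownian_increment_sq_moment_le[OF BM]) auto
  also have "\<dots> \<le> ennreal (d * \<bar>r - p\<bar>)"
    unfolding d_def by (intro ennreal_leI mult_left_mono) auto
  finally show "(\<integral>\<^sup>+\<omega>. ennreal ((norm (version B (r, \<omega>) - version B (p, \<omega>)))^2) \<partial>M)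
      \<le> ennreal (d * \<bar>r - p\<bar>)" .
qed

definition C_x :: real where
  "C_x = 2 * (norm x0)^2
     + 2 * (a * (L + m) * R^2 + (8 / (a * m) + 1) * \<sigma>^2 / 4 * d + 2 * \<sigma>^2 * d) / (a * m / 8)"

definition C_u :: real where
  "C_u = 8 * (\<sigma>^2 * d + \<sigma>^2 / 4 * d + (a * L)^2 * C_x) + 2 * \<sigma>^2 * d"

lemma C_x_nonneg: "0 \<le> C_x"
  unfolding C_x_def d_def using a_pos m_pos L_pos by simp

lemma C_u_nonneg: "0 \<le> C_u"
  unfolding C_u_def d_def using C_x_nonneg by simp

lemma langevin_path_at:
  assumes "\<omega> \<in> space M" "\<omega> \<notin> bad_set"
  shows "langevin_path G L m R a \<delta> \<sigma> x0 (\<lambda>s. B s \<omega>) (\<lambda>s. x s \<omega>) (\<lambda>s. u s \<omega>)"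
  using assms bad_set by (intro langevin_path_if_good) auto

lemma AE_position_sq_le:
  "AE \<omega> in M. ennreal ((norm (version x (s, \<omega>)))^2) \<le> ennreal (2 * (norm x0)^2) +
     2 * (\<integral>\<^sup>+r. ennreal (indicator {0..max 0 s} r * exp (- (a * m / 8) * (max 0 s - r)))
       * lyapunov_forcing_bound (a * (L + m) * R^2) (8 / (a * m) + 1) \<sigma> (\<lambda>r. version B (r, \<omega>)) r
           \<partial>lborel)"
  using AE_space AE_not_bad
proof eventually_elim
  case (elim \<omega>)
  show ?case
    using langevin_path.position_sq_bound[OF langevin_path_at[OF elim], of "max 0 s"] elim(2)
    by (simp add: version_eq) (simp add: version_def)
qed

lemma position_moment_le: "(\<integral>\<^sup>+\<omega>. ennreal ((norm (version x (s, \<omega>)))^2) \<partial>M) \<le> ennreal C_x"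
proof -
  define C1 where "C1 = a * (L + m) * R^2 + (8 / (a * m) + 1) * \<sigma>^2 / 4 * d + 2 * \<sigma>^2 * d"
  have "0 \<le> 8 / (a * m) + 1" using a_pos m_pos by simp
  then have "0 \<le> C1" unfolding C1_def d_def using a_pos m_pos L_pos by simp
  from AE_position_sq_le[of s]
  have "(\<integral>\<^sup>+\<omega>. ennreal ((norm (version x (s, \<omega>)))^2) \<partial>M) \<le>
      (\<integral>\<^sup>+\<omega>. ennreal (2 * (norm x0)^2) \<partial>M) + 2 * ennreal (C1 / (a * m / 8))"
  proof (rule noise.expectation_le_exp_convolution_bound)
    show "(\<integral>\<^sup>+\<omega>. lyapunov_forcing_bound (a * (L + m) * R^2) (8 / (a * m) + 1) \<sigma>
        (\<lambda>r'. version B (r', \<omega>)) r \<partial>M)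
        \<le> ennreal C1" for r
      unfolding C1_def using a_pos m_pos L_pos
          by (intro noise.expectation_lyapunov_forcing_bound_le) auto
  qed (use \<open>0 \<le> C1\<close> a_pos m_pos noise.measurable_lyapunov_forcing_bound in auto)
  also have "\<dots> = ennreal C_x"
    using \<open>0 \<le> C1\<close> a_pos m_pos unfolding C_x_def C1_def[symmetric]
    by (simp add: numeral_mult_ennreal emeasure_space_1 ennreal_plus[symmetric] del: ennreal_plus)
  finally show ?thesis .
qed

lemma AE_velocity_sq_le:
  "AE \<omega> in M. ennreal ((norm (version u (s, \<omega>)))^2) \<le>
     ennreal (2 * \<sigma>^2) * local_sq_deviation (\<lambda>r. version B (r, \<omega>)) (max 0 s) +
     8 * (\<integral>\<^sup>+r. ennreal (indicator {0..max 0 s} r * exp (- 1 * (max 0 s - r)))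
       * gap_forcing_bound (a * L) \<sigma> \<delta> (\<lambda>r. version B (r, \<omega>)) (\<lambda>r. version x (r, \<omega>)) r \<partial>lborel)"
  using AE_space AE_not_bad
proof eventually_elim
  case (elim \<omega>)
  show ?case
    using langevin_path.velocity_sq_bound[OF langevin_path_at[OF elim], of "max 0 s"] elim(2)
    by (simp add: version_eq add.commute) (simp add: version_def)
qed

lemma velocity_moment_le: "(\<integral>\<^sup>+\<omega>. ennreal ((norm (version u (s, \<omega>)))^2) \<partial>M) \<le> ennreal C_u"
proof -
  define C2 where "C2 = \<sigma>^2 * d + \<sigma>^2 / 4 * d + (a * L)^2 * C_x"
  have "0 \<le> C2" unfolding C2_def d_def using C_x_nonneg by simp
  have [measurable]: "version x \<in> borel_measurable (lborel \<Otimes>\<^sub>M M)" by (fact measurable_versions)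
  from AE_velocity_sq_le[of s]
  have "(\<integral>\<^sup>+\<omega>. ennreal ((norm (version u (s, \<omega>)))^2) \<partial>M) \<le>
      (\<integral>\<^sup>+\<omega>. ennreal (2 * \<sigma>^2) * local_sq_deviation (\<lambda>r. version B (r, \<omega>)) (max 0 s) \<partial>M)
      + 8 * ennreal (C2 / 1)"
  proof (rule noise.expectation_le_exp_convolution_bound)
    show "(\<integral>\<^sup>+\<omega>. gap_forcing_bound (a * L) \<sigma> \<delta> (\<lambda>r'. version B (r', \<omega>)) (\<lambda>r'. version x (r', \<omega>)) r \<partial>M)
        \<le> ennreal C2" for r
      unfolding C2_def
          by (intro noise.expectation_gap_forcing_bound_le position_moment_le C_x_nonneg) simp
  qed (use \<open>0 \<le> C2\<close> noise.measurable_local_sq_deviation_at noise.measurable_gap_forcing_bound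
      in auto)
  also have "\<dots> = ennreal (2 * \<sigma>^2) * (\<integral>\<^sup>+\<omega>. local_sq_deviation (\<lambda>r. version B (r, \<omega>)) (max 0 s) \<partial>M)
      + 8 * ennreal C2"
    using noise.measurable_local_sq_deviation_at by (simp add: nn_integral_cmult)
  also have "\<dots> \<le> ennreal (2 * \<sigma>^2) * ennreal d + 8 * ennreal C2"
    by (intro add_right_mono mult_left_mono noise.expectation_local_sq_deviation_le) simp
  also have "\<dots> = ennreal (2 * \<sigma>^2 * d + 8 * C2)"
    using \<open>0 \<le> C2\<close> unfolding d_def
    by (simp add: numeral_mult_ennreal ennreal_mult[symmetric] ennreal_plus[symmetric] del:
        ennreal_plus)
  also have "2 * \<sigma>^2 * d + 8 * C2 = C_u"
    unfolding C_u_def C2_def by (simp add: algebra_simps)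
  finally show ?thesis .
qed

lemma AE_gradient_lag_sq_le:
  assumes t: "t \<ge> 0"
  shows "AE \<omega> in M. ennreal ((norm (G (x t \<omega>) - G (x (grid_floor \<delta> t) \<omega>)))^2) \<le>
     ennreal (L^2 * \<delta>)
         * (\<integral>\<^sup>+r. ennreal (indicator {grid_floor \<delta> t..t} r)
             * ennreal ((norm (version u (r, \<omega>)))^2) \<partial>lborel)"
  using AE_space AE_not_bad
proof eventually_elim
  case (elim \<omega>)
  show ?case
    using langevin_path.gradient_lag_sq_bound[OF langevin_path_at[OF elim] t] elim(2)
    by (simp add: ennreal_mult version_def extend0_def)
qed

lemma gradient_lag_moment_le:
  assumes t: "t \<ge> 0"
  shows "(\<integral>\<^sup>+\<omega>. ennreal ((norm (G (x t \<omega>) - G (x (grid_floor \<delta> t) \<omega>)))^2) \<partial>M)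
      \<le> ennreal (L^2 * \<delta>^2 * C_u)"
proof -
  define g where "g = grid_floor \<delta> t"
  have g: "g \<le> t" "t - g \<le> \<delta>" using grid_floor_bounds[OF \<delta>_pos, of t] unfolding g_def by auto
  have [measurable]: "version u \<in> borel_measurable (lborel \<Otimes>\<^sub>M M)" by (fact measurable_versions)
  have "(\<integral>\<^sup>+\<omega>. ennreal ((norm (G (x t \<omega>) - G (x g \<omega>)))^2) \<partial>M) \<le>
      (\<integral>\<^sup>+\<omega>. ennreal (L^2 * \<delta>) *
        (\<integral>\<^sup>+r. ennreal (indicator {g..t} r) * ennreal ((norm (version u (r, \<omega>)))^2) \<partial>lborel) \<partial>M)"
    using AE_gradient_lag_sq_le[OF t] unfolding g_def by (rule nn_integral_mono_AE)
  also have "\<dots> = ennreal (L^2 * \<delta>) *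
      (\<integral>\<^sup>+\<omega>. (\<integral>\<^sup>+r. ennreal (indicator {g..t} r) * ennreal ((norm (version u (r, \<omega>)))^2) \<partial>lborel) \<partial>M)"
    by (rule nn_integral_cmult) measurable
  also have "\<dots> \<le> ennreal (L^2 * \<delta>) * (ennreal C_u * (\<integral>\<^sup>+r. ennreal (indicator {g..t} r) \<partial>lborel))"
    using velocity_moment_le
    by (intro mult_left_mono
        noise.expectation_kernel_integral_le[where F="\<lambda>p. ennreal ((norm (version u p))^2)"])
      auto
  also have "\<dots> = ennreal (L^2 * \<delta> * C_u * (t - g))"
    using g \<delta>_pos C_u_nonneg by (simp add: ennreal_indicator ennreal_mult[symmetric] mult.assoc)
  also have "\<dots> \<le> ennreal (L^2 * \<delta> * C_u * \<delta>)"
    using g \<delta>_pos C_u_nonneg by (intro ennreal_leI mult_left_mono) auto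
  also have "L^2 * \<delta> * C_u * \<delta> = L^2 * \<delta>^2 * C_u"
    by (simp add: power2_eq_square)
  finally show ?thesis unfolding g_def .
qed

theorem gradient_lag_moment_bound:
  assumes "t \<ge> 0"
  shows "(\<integral>\<^sup>+ \<omega>. ennreal ((norm (G (x t \<omega>) - G (x (of_int \<lfloor>t / \<delta>\<rfloor> * \<delta>) \<omega>)))^2) \<partial>M)
           \<le> ennreal (10^9 * L^2 * \<delta>^2 * (R^2 + real CARD('d) / m))"
proof -
  have "C_u \<le> 10^9 * (R^2 + d / m)"
    unfolding C_u_def C_x_def
    using x0 by (intro moment_constant_le \<sigma>_sq) (auto simp: d_def intro: power_mono)
  then have "L^2 * \<delta>^2 * C_u \<le> L^2 * \<delta>^2 * (10^9 * (R^2 + d / m))"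
    by (intro mult_left_mono) auto
  then show ?thesis
    using gradient_lag_moment_le[OF assms] unfolding grid_floor_def d_def
    by (auto simp: algebra_simps intro: order_trans ennreal_leI)
qed

end

theorem proposition19:
  fixes U :: "real^'d \<Rightarrow> real" and G :: "real^'d \<Rightarrow> real^'d"
    and L m R \<delta> t :: real and x0 :: "real^'d"
    and M :: "'a measure" and B x u :: "real \<Rightarrow> 'a \<Rightarrow> real^'d"
  assumes grad: "\<forall>z. (U has_derivative (\<lambda>h. G z \<bullet> h)) (at z)"
    and contG: "continuous_on UNIV G"
    and Lpos: "L > 0"
    and Lip: "\<forall>y z. norm (G y - G z) \<le> L * norm (y - z)"
    and G0: "G 0 = 0"
    and mpos: "m > 0" and Rpos: "R > 0"
    and dissip: "\<forall>y z. norm (y - z) > R \<longrightarrow> (G y - G z) \<bullet> (y - z) \<ge> m * (norm (y - z))^2"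
    and delta_pos: "\<delta> > 0"
    and delta_le: "\<delta> \<le> 1 / (12000 * (L / m))"
    and x0: "norm x0 \<le> R"
    and BM: "brownian_motion M B"
    and xmeas: "\<forall>s\<ge>0. x s \<in> borel_measurable M"
    and umeas: "\<forall>s\<ge>0. u s \<in> borel_measurable M"
    and sol: "AE \<omega> in M.
        continuous_on {0..} (\<lambda>s. x s \<omega>) \<and> continuous_on {0..} (\<lambda>s. u s \<omega>) \<and>
        (\<forall>s\<ge>0. x s \<omega> = x0 + integral {0..s} (\<lambda>r. u r \<omega>) \<and>
                u s \<omega> = integral {0..s} (\<lambda>r. (-2) *\<^sub>R u r \<omega>
                            - (1 / (1000 * (L / m) * L)) *\<^sub>R G (x (of_int \<lfloor>r / \<delta>\<rfloor> * \<delta>) \<omega>))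
                         + sqrt (4 / (1000 * (L / m) * L)) *\<^sub>R B s \<omega>)"
    and tpos: "t > 0"
  shows "(\<integral>\<^sup>+ \<omega>. ennreal ((norm (G (x t \<omega>) - G (x (of_int \<lfloor>t / \<delta>\<rfloor> * \<delta>) \<omega>)))^2) \<partial>M)
           \<le> ennreal (10^9 * L^2 * \<delta>^2 * (R^2 + real CARD('d) / m))"
proof -
  interpret langevin_solution G L m R \<delta> x0 M B x u
    by unfold_locales (fact Lpos Lip G0 mpos dissip delta_pos delta_le x0 BM xmeas umeas sol)+
  show ?thesis using tpos by (intro gradient_lag_moment_bound) simp
qed

end
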